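(* For every $u\in\mathrm{NSym}$: (1) $Z(\alpha_+^*(u))=B_-(\Pi(Z(u)))$; (2) $Z(\alpha_-^*(u))=Z(u)\circ\epsilon_1=Z(u)\circ\ell_2$.
   Context: $k$ is a field of characteristic $0$. $\mathrm{NSym}=k\langle E_1,E_2,\dots\rangle$ is the free associative algebra with $\deg E_i=i$. $\alpha_+^*:\mathrm{NSym}\to\mathrm{NSym}$ is the linear map with $\alpha_+^*(E_{j_1}E_{j_2}\cdots E_{j_k})=E_{j_1}\cdots E_{j_{k-1}}$ if $j_k=1$ and $0$ otherwise (and $\alpha_+^*(1)=0$); $\alpha_-^*:\mathrm{NSym}\to\mathrm{NSym}$ is $\alpha_-^*(u)=uE_1$. (These are the duals, under the pairing $\langle E_I,M_J\rangle=\delta_{I,J}$ with quasi-symmetric functions, of $M_I\mapsto M_{I\sqcup(1)}$ and of $M_{(a_1,\dots,a_k)}\mapsto M_{(a_1,\dots,a_{k-1})}$ if $a_k=1$, $0$ otherwise.) A rooted tree is a finite poset with a unique maximal element (root) such that for each vertex the set of vertices exceeding it is a chain; $|t|$ is its number of vertices and $\mathrm{Sym}(t)$ its automorphism group. For a forest (commutative monomial of rooted trees) $t_1\cdots t_k$, $B_+(t_1\cdots t_k)$ is the rooted tree obtained by adjoining a new root whose children are the roots of $t_1,\dots,t_k$; $B_+(1)=\bullet$. Ladders: $\ell_i=B_+^{i-1}(\bullet)$, so $\ell_2$ is the two-vertex tree. $k\mathcal{T}$ is the vector space with basis the rooted trees, with Grossman–Larson product $\circ$: for $t=B_+(t_1\cdots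 t_n)$ and $t'$ with $m$ vertices, $t\circ t'$ is the sum of the $m^n$ rooted trees obtained by attaching each $t_i$ to some vertex of $t'$ (root of $t_i$ becoming a child of that vertex), and $\bullet\circ t'=t'$. $\Pi:k\mathcal{T}\to k\mathcal{T}$ is the linear projection with $\Pi(t)=t$ if the root of $t$ has exactly one child (i.e. $t=B_+(t')$ for a rooted tree $t'$) and $\Pi(t)=0$ otherwise; $B_-$ is the linear map on the span of such trees with $B_-(B_+(t'))=t'$. Let $\kappa_n=\sum_{t:\,|t|=n+1}t/|\mathrm{Sym}(t)|$, $\epsilon_0=\bullet$, $\epsilon_n=\kappa_1\circ\epsilon_{n-1}-\kappa_2\circ\epsilon_{n-2}+\dots+(-1)^{n-1}\kappa_n$ for $n\ge1$. $Z:\mathrm{NSym}\to k\mathcal{T}$ is the algebra homomorphism (for $\circ$) with $Z(E_n)=\epsilon_n$. *)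

theory Defs
  imports Main "HOL-Library.Multiset" "HOL-Library.Sublist"
begin

text \<open>An (unlabelled, non-planar) rooted tree is a root together with the multiset
of its subtrees; this datatype represents rooted trees up to isomorphism.\<close>
datatype rtree = Node "rtree multiset"

abbreviation bullet :: rtree where "bullet \<equiv> Node {#}"

primrec tsize :: "rtree \<Rightarrow> nat" where
  "tsize (Node N) = Suc (sum_mset (image_mset tsize N))"

definition Bplus :: "rtree multiset \<Rightarrow> rtree" where
  "Bplus F = Node F"

definition ladder :: "nat \<Rightarrow> rtree" where
  "ladder i = ((Bplus \<circ> (\<lambda>t. {#t#})) ^^ (i - 1)) bullet"

datatype ptree = P "ptree list"

primrec forget :: "ptree \<Rightarrow> rtree" where
  "forget (P xs) = Node (mset (map forget xs))"

text \<open>Vertices of a plane tree are addresses (paths of child indices from the root).\<close>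
fun valid_addr :: "ptree \<Rightarrow> nat list \<Rightarrow> bool" where
  "valid_addr t [] = True"
| "valid_addr (P xs) (i # a) = (i < length xs \<and> valid_addr (xs ! i) a)"

definition pverts :: "ptree \<Rightarrow> nat list set" where
  "pverts p = {a. valid_addr p a}"

text \<open>Poset order on vertices: v \<le> w iff w lies on the path from v to the root,
i.e. the address of w is a prefix of that of v (the root is the maximum).\<close>
definition vle :: "nat list \<Rightarrow> nat list \<Rightarrow> bool" where
  "vle v w = prefix w v"

definition paut :: "ptree \<Rightarrow> (nat list \<Rightarrow> nat list) set" where
  "paut p = {f. bij_betw f (pverts p) (pverts p) \<and> (\<forall>a. a \<notin> pverts p \<longrightarrow> f a = a)
              \<and> (\<forall>v\<in>pverts p. \<forall>w\<in>pverts p. vle v w \<longleftrightarrow> vle (f v) (f w))}"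

definition plane_rep :: "rtree \<Rightarrow> ptree" where
  "plane_rep t = (SOME p. forget p = t)"

text \<open>|Sym(t)|: number of order automorphisms of the poset of vertices of t.\<close>
definition sym_card :: "rtree \<Rightarrow> nat" where
  "sym_card t = card (paut (plane_rep t))"

text \<open>Elements of kT are finitely supported functions rtree \<Rightarrow> 'k (coefficients).\<close>
type_synonym 'k kT = "rtree \<Rightarrow> 'k"

definition finsupp :: "('a \<Rightarrow> 'k::zero) \<Rightarrow> bool" where
  "finsupp x = finite {a. x a \<noteq> 0}"

definition basis :: "rtree \<Rightarrow> 'k::zero_neq_one kT" where
  "basis t = (\<lambda>r. if r = t then 1 else 0)"

text \<open>Auxiliary trees whose vertices are flagged as old (True) / new (False).\<close>
datatype ftree = FNode bool "ftree multiset"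

primrec mark :: "bool \<Rightarrow> rtree \<Rightarrow> ftree" where
  "mark b (Node N) = FNode b (image_mset (mark b) N)"

primrec unmark :: "ftree \<Rightarrow> rtree" where
  "unmark (FNode b N) = Node (image_mset unmark N)"

function ins :: "ftree \<Rightarrow> ftree \<Rightarrow> ftree multiset" where
  "ins s (FNode b N) =
     (if b then {# FNode b (add_mset s N) #} else {#}) +
     sum_mset (image_mset (\<lambda>c. if c \<in># N then
        image_mset (\<lambda>c'. FNode b (add_mset c' (N - {#c#}))) (ins s c) else {#}) N)"
  by pat_completeness auto
termination
  by (relation "measure (\<lambda>(s, t). size t)")
     (auto simp: size_multiset_overloaded_eq intro: le_imp_less_Suc
               elim!: sum_mset.remove[THEN ssubst] dest!: multi_member_split)

text \<open>Multiset of trees obtained from t and t' = B_+(t_1...t_n) \<circ> t': each t_i is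
attached to some vertex of t' (m^n results, counted with multiplicity).\<close>
definition gl_trees :: "rtree \<Rightarrow> rtree \<Rightarrow> rtree multiset" where
  "gl_trees t t' = (case t of Node C \<Rightarrow>
     image_mset unmark
       (fold_mset (\<lambda>s R. sum_mset (image_mset (ins (mark False s)) R)) {# mark True t' #} C))"

definition gl :: "'k::field kT \<Rightarrow> 'k kT \<Rightarrow> 'k kT" (infixl "\<circ>\<^sub>G\<^sub>L" 70) where
  "gl x y = (\<lambda>r. \<Sum>t\<in>{t. x t \<noteq> 0}. \<Sum>t'\<in>{t'. y t' \<noteq> 0}.
                   x t * y t' * of_nat (count (gl_trees t t') r))"

definition Pi_proj :: "'k::zero kT \<Rightarrow> 'k kT" where
  "Pi_proj x = (\<lambda>r. if (\<exists>t'. r = Node {#t'#}) then x r else 0)"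

text \<open>B_-(B_+(t')) = t', on the span of trees whose root has one child.\<close>
definition Bminus :: "'k::zero kT \<Rightarrow> 'k kT" where
  "Bminus y = (\<lambda>r. y (Node {#r#}))"

definition kappa :: "nat \<Rightarrow> 'k::field kT" where
  "kappa n = (\<lambda>t. if tsize t = n + 1 then 1 / of_nat (sym_card t) else 0)"

fun eps :: "nat \<Rightarrow> 'k::field kT" where
  "eps n = (if n = 0 then basis bullet
            else (\<lambda>r. \<Sum>j<n. (-1) ^ (n - j - 1) * (gl (kappa (n - j)) (eps j)) r))"

text \<open>An element of NSym: finitely supported coefficient function on words
(j_1,...,j_k) (all j_i \<ge> 1), the word standing for E_{j_1}...E_{j_k}.\<close>
definition is_nsym :: "(nat list \<Rightarrow> 'k::zero) \<Rightarrow> bool" where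
  "is_nsym u \<longleftrightarrow> finsupp u \<and> (\<forall>w. u w \<noteq> 0 \<longrightarrow> (\<forall>j\<in>set w. 1 \<le> j))"

definition alpha_plus :: "(nat list \<Rightarrow> 'k::zero) \<Rightarrow> (nat list \<Rightarrow> 'k)" where
  "alpha_plus u = (\<lambda>w. u (w @ [1]))"

definition alpha_minus :: "(nat list \<Rightarrow> 'k::zero) \<Rightarrow> (nat list \<Rightarrow> 'k)" where
  "alpha_minus u = (\<lambda>w. if w \<noteq> [] \<and> last w = 1 then u (butlast w) else 0)"

definition Z_word :: "nat list \<Rightarrow> 'k::field kT" where
  "Z_word w = foldr (\<lambda>j acc. gl (eps j) acc) w (basis bullet)"

definition Z :: "(nat list \<Rightarrow> 'k::field) \<Rightarrow> 'k kT" where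
  "Z u = (\<lambda>r. \<Sum>w\<in>{w. u w \<noteq> 0}. u w * Z_word w r)"

end

theory Submission
  imports Defs "HOL-Combinatorics.List_Permutation"
begin

text \<open>Since Z is multiplicative and alpha_-^* is right multiplication by E_1, part (2) amounts to
  associativity of the Grossman--Larson product together with eps_1 = kappa_1 = ell_2.

  For part (1): the root of a tree in t o t' has exactly one child iff either t' is the bullet and
  t = B_+(r), or t' = B_+(s) and the tree is B_+ of a tree in t o s. Hence
  B_-Pi(x o y) = y(bullet) B_-Pi(x) + x o B_-Pi(y). As eps_n(bullet) = 0 for n > 0, along a word this
  gives B_-Pi Z(E_(j_1)...E_(j_k)) = Z(E_(j_1)...E_(j_(k-1))) o B_-Pi(eps_(j_k)). Finally
  B_- kappa_n = kappa_(n-1), because B_+ does not change the symmetry factor, and then the recursion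
  for eps_n telescopes to B_-Pi(eps_n) = bullet for n = 1 and 0 otherwise.

  Associativity is proved combinatorially: colour the vertices of the three trees by 0, 1 and 2; both
  bracketings enumerate the same graftings, which reduces to an exchange law for grafting two trees
  one after the other.\<close>

lemma image_mset_sum_mset: "image_mset f (sum_mset M) = sum_mset (image_mset (image_mset f) M)"
  by (induct M) auto

lemma sum_mset_sum_mset_image: "(\<Sum>z\<in>#(\<Sum>y\<in>#A. F y). g z) = (\<Sum>y\<in>#A. \<Sum>z\<in>#F y. g z)"
  by (induct A) auto

lemma sum_mset_add_mset_image: "(\<Sum>b\<in>#B. add_mset (g b) (h b)) = image_mset g B + (\<Sum>b\<in>#B. h b)"
  by (induct B) auto

lemma sum_mset_image_mset_swap: "(\<Sum>a\<in>#A. image_mset (f a) B) = (\<Sum>b\<in>#B. image_mset (\<lambda>a. f a b) A)"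
  by (induct A) (auto simp: sum_mset_add_mset_image)

lemma image_mset_sum: "image_mset h (sum F A) = (\<Sum>i\<in>A. image_mset h (F i))"
  by (induct A rule: infinite_finite_induct) auto

lemma sum_mset_image_sum: "sum_mset (image_mset h (sum F A)) = (\<Sum>i\<in>A. sum_mset (image_mset h (F i)))"
  by (induct A rule: infinite_finite_induct) auto

lemma count_image_mset_inj: "inj f \<Longrightarrow> count (image_mset f M) (f x) = count M x"
  by (induction M) (auto simp: inj_eq)

lemma filter_mset_sum_mset: "filter_mset Q (sum_mset M) = sum_mset (image_mset (filter_mset Q) M)"
  by (induction M) auto

lemma sum_mset_image_filter_mset: "sum_mset (image_mset f (filter_mset Q M)) = (\<Sum>w\<in>#M. if Q w then f w else {#})"
  by (induction M) auto

section \<open>Grafting on labelled trees\<close>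

datatype 'a ltree = LNode 'a "'a ltree multiset"

primrec labels :: "'a ltree \<Rightarrow> 'a set" where
  "labels (LNode a N) = insert a (\<Union> (set_mset (image_mset labels N)))"

primrec children :: "'a ltree \<Rightarrow> 'a ltree multiset" where
  "children (LNode a N) = N"

definition avoids :: "('a \<Rightarrow> bool) \<Rightarrow> 'a ltree \<Rightarrow> bool" where
  "avoids p T \<longleftrightarrow> (\<forall>a\<in>labels T. \<not> p a)"

text \<open>graft p s T attaches s below each vertex of T whose label satisfies p; the operation ins
  used to define the Grossman--Larson product is the case of Boolean labels and p = id.\<close>
function graft :: "('a \<Rightarrow> bool) \<Rightarrow> 'a ltree \<Rightarrow> 'a ltree \<Rightarrow> 'a ltree multiset" where
  "graft p s (LNode a N) =
     (if p a then {# LNode a (add_mset s N) #} else {#}) +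
     sum_mset (image_mset (\<lambda>c. if c \<in># N then
        image_mset (\<lambda>c'. LNode a (add_mset c' (N - {#c#}))) (graft p s c) else {#}) N)"
  by pat_completeness auto
termination
  by (relation "measure (\<lambda>(p, s, t). size t)")
     (auto simp: size_multiset_overloaded_eq intro: le_imp_less_Suc
               elim!: sum_mset.remove[THEN ssubst] dest!: multi_member_split)

declare graft.simps[simp del]

definition graft_forest :: "('a \<Rightarrow> bool) \<Rightarrow> 'a ltree \<Rightarrow> 'a ltree multiset \<Rightarrow> 'a ltree multiset multiset" where
  "graft_forest p s N = (\<Sum>c\<in>#N. image_mset (\<lambda>c'. add_mset c' (N - {#c#})) (graft p s c))"

lemma graft_LNode:
  "graft p s (LNode a N) = (if p a then {# LNode a (add_mset s N) #} else {#}) + image_mset (LNode a) (graft_forest p s N)"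
proof -
  have "(\<Sum>c\<in>#N. if c \<in># N then image_mset (\<lambda>c'. LNode a (add_mset c' (N - {#c#}))) (graft p s c) else {#})
      = (\<Sum>c\<in>#N. image_mset (LNode a) (image_mset (\<lambda>c'. add_mset c' (N - {#c#})) (graft p s c)))"
    by (intro arg_cong[where f=sum_mset] image_mset_cong) (simp add: image_mset.compositionality o_def)
  then show ?thesis unfolding graft_forest_def graft.simps[of p s a N]
    by (simp add: image_mset_sum_mset image_mset.compositionality o_def)
qed

lemma graft_forest_empty[simp]: "graft_forest p s {#} = {#}"
  by (simp add: graft_forest_def)

lemma graft_forest_add_mset: "graft_forest p s (add_mset c N) =
  image_mset (\<lambda>c'. add_mset c' N) (graft p s c) + image_mset (add_mset c) (graft_forest p s N)"
proof -
  have "(\<Sum>c0\<in>#N. image_mset (\<lambda>c'. add_mset c' (add_mset c N - {#c0#})) (graft p s c0))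
      = (\<Sum>c0\<in>#N. image_mset (add_mset c) (image_mset (\<lambda>c'. add_mset c' (N - {#c0#})) (graft p s c0)))"
    by (intro arg_cong[where f=sum_mset] image_mset_cong) (simp add: image_mset.compositionality o_def add_mset_commute)
  then show ?thesis unfolding graft_forest_def by (simp add: image_mset_sum_mset image_mset.compositionality o_def)
qed

lemma graft_forest_mset: "graft_forest p s (mset xs) =
  (\<Sum>i<length xs. image_mset (\<lambda>c'. mset (xs[i := c'])) (graft p s (xs ! i)))"
proof (induction xs)
  case Nil
  then show ?case by simp
next
  case (Cons x xs)
  have "graft_forest p s (mset (x # xs)) = image_mset (\<lambda>c'. mset (c' # xs)) (graft p s x)
      + image_mset (add_mset x) (graft_forest p s (mset xs))"
    by (simp add: graft_forest_add_mset)
  also have "image_mset (add_mset x) (graft_forest p s (mset xs)) =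
     (\<Sum>i<length xs. image_mset (\<lambda>c'. mset (x # xs[i := c'])) (graft p s (xs ! i)))"
    unfolding Cons.IH by (simp add: image_mset_sum image_mset.compositionality o_def)
  finally show ?case
    unfolding length_Cons sum.lessThan_Suc_shift by simp
qed

lemma in_graft_forest:
  "M \<in># graft_forest p s N \<Longrightarrow> \<exists>c c'. c \<in># N \<and> c' \<in># graft p s c \<and> M = add_mset c' (N - {#c#})"
  unfolding graft_forest_def by auto

lemma graft_avoids: "avoids p T \<Longrightarrow> graft p s T = {#}"
proof (induction T)
  case (LNode a N)
  then have "graft_forest p s N = {#}" unfolding graft_forest_def avoids_def
    by (intro sum_mset.neutral) auto
  then show ?case using LNode.prems by (simp add: graft_LNode avoids_def)
qed

lemma graft_cong: "\<forall>a\<in>labels T. p a = q a \<Longrightarrow> graft p s T = graft q s T"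
proof (induction T)
  case (LNode a N)
  then have "graft_forest p s N = graft_forest q s N"
    unfolding graft_forest_def by (intro arg_cong[where f=sum_mset] image_mset_cong) auto
  then show ?case using LNode.prems by (simp add: graft_LNode)
qed

lemma labels_graft: "z \<in># graft p s T \<Longrightarrow> labels z \<subseteq> labels s \<union> labels T"
proof (induction T arbitrary: z)
  case (LNode a N)
  show ?case
  proof (cases "z \<in># image_mset (LNode a) (graft_forest p s N)")
    case True
    then obtain M where M: "M \<in># graft_forest p s N" "z = LNode a M" by auto
    then obtain c c' where cc: "c \<in># N" "c' \<in># graft p s c" "M = add_mset c' (N - {#c#})"
      using in_graft_forest by blast
    have "labels c' \<subseteq> labels s \<union> labels c" using LNode.IH cc by blast
    moreover have "set_mset (N - {#c#}) \<subseteq> set_mset N" by (meson in_diffD subsetI)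
    ultimately show ?thesis using M cc by auto
  next
    case False
    then have "z = LNode a (add_mset s N)" using LNode.prems by (auto simp: graft_LNode split: if_splits)
    then show ?thesis by auto
  qed
qed

lemma avoids_graft: "avoids p s \<Longrightarrow> avoids p c \<Longrightarrow> c' \<in># graft q s c \<Longrightarrow> avoids p c'"
  using labels_graft unfolding avoids_def by blast

lemma graft_forest_exchange:
  assumes "\<And>c. c \<in># N \<Longrightarrow> (\<Sum>z\<in>#graft p x c. graft q s z) =
            (\<Sum>z\<in>#graft q s c. graft p x z) + (\<Sum>x'\<in>#graft q s x. graft p x' c)"
  shows "(\<Sum>M\<in>#graft_forest p x N. graft_forest q s M) =
         (\<Sum>M\<in>#graft_forest q s N. graft_forest p x M) + (\<Sum>x'\<in>#graft q s x. graft_forest p x' N)"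
  using assms
proof (induction N)
  case empty
  then show ?case by simp
next
  case (add c N)
  have IH: "(\<Sum>M\<in>#graft_forest p x N. graft_forest q s M) =
         (\<Sum>M\<in>#graft_forest q s N. graft_forest p x M) + (\<Sum>x'\<in>#graft q s x. graft_forest p x' N)"
    using add by simp
  have Ec: "(\<Sum>z\<in>#graft p x c. graft q s z) =
            (\<Sum>z\<in>#graft q s c. graft p x z) + (\<Sum>x'\<in>#graft q s x. graft p x' c)"
    using add by simp
  have expand: "(\<Sum>M\<in>#graft_forest p1 x1 (add_mset c N). graft_forest p2 x2 M) =
     image_mset (\<lambda>d. add_mset d N) (\<Sum>c'\<in>#graft p1 x1 c. graft p2 x2 c')
   + (\<Sum>c'\<in>#graft p1 x1 c. image_mset (\<lambda>M. add_mset c' M) (graft_forest p2 x2 N))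
   + (\<Sum>M\<in>#graft_forest p1 x1 N. image_mset (\<lambda>d. add_mset d M) (graft p2 x2 c))
   + image_mset (add_mset c) (\<Sum>M\<in>#graft_forest p1 x1 N. graft_forest p2 x2 M)" for p1 p2 x1 x2
    by (simp add: graft_forest_add_mset sum_mset.distrib image_mset_sum_mset image_mset.compositionality
        o_def add_mset_commute ac_simps)
  have R: "(\<Sum>x'\<in>#graft q s x. graft_forest p x' (add_mset c N)) =
     image_mset (\<lambda>d. add_mset d N) (\<Sum>x'\<in>#graft q s x. graft p x' c)
   + image_mset (add_mset c) (\<Sum>x'\<in>#graft q s x. graft_forest p x' N)"
    by (simp add: graft_forest_add_mset sum_mset.distrib image_mset_sum_mset image_mset.compositionality o_def)
  show ?case
    unfolding expand R Ec IH sum_mset_image_mset_swap[of _ "graft p x c"] sum_mset_image_mset_swap[of _ "graft q s c"]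
    by (simp add: ac_simps)
qed

text \<open>Grafting x and then s puts s either into the original tree or into the grafted copy of x;
  there is no third kind of term because s offers no place for x.\<close>
lemma graft_exchange:
  assumes "avoids p s"
  shows "(\<Sum>z\<in>#graft p x w. graft q s z) =
         (\<Sum>z\<in>#graft q s w. graft p x z) + (\<Sum>x'\<in>#graft q s x. graft p x' w)"
proof (induction w)
  case (LNode a N)
  have forest: "(\<Sum>M\<in>#graft_forest p x N. graft_forest q s M) =
         (\<Sum>M\<in>#graft_forest q s N. graft_forest p x M) + (\<Sum>x'\<in>#graft q s x. graft_forest p x' N)"
    by (rule graft_forest_exchange) (use LNode in auto)
  have xs: "graft p x s = {#}" using assms by (rule graft_avoids)
  have L: "(\<Sum>z\<in>#graft p x (LNode a N). graft q s z) =
      (if p a \<and> q a then {#LNode a (add_mset s (add_mset x N))#} else {#})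
    + (if p a then image_mset (\<lambda>d. LNode a (add_mset d N)) (graft q s x) else {#})
    + (if p a then image_mset (\<lambda>M. LNode a (add_mset x M)) (graft_forest q s N) else {#})
    + (if q a then image_mset (\<lambda>M. LNode a (add_mset s M)) (graft_forest p x N) else {#})
    + image_mset (LNode a) (\<Sum>M\<in>#graft_forest p x N. graft_forest q s M)"
    by (simp add: graft_LNode graft_forest_add_mset sum_mset.distrib image_mset_sum_mset
        image_mset.compositionality o_def)
  have R1: "(\<Sum>z\<in>#graft q s (LNode a N). graft p x z) =
      (if p a \<and> q a then {#LNode a (add_mset x (add_mset s N))#} else {#})
    + (if q a then image_mset (\<lambda>M. LNode a (add_mset s M)) (graft_forest p x N) else {#})
    + (if p a then image_mset (\<lambda>M. LNode a (add_mset x M)) (graft_forest q s N) else {#})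
    + image_mset (LNode a) (\<Sum>M\<in>#graft_forest q s N. graft_forest p x M)"
    by (simp add: graft_LNode graft_forest_add_mset sum_mset.distrib image_mset_sum_mset
        image_mset.compositionality o_def xs)
  have R2: "(\<Sum>x'\<in>#graft q s x. graft p x' (LNode a N)) =
      (if p a then image_mset (\<lambda>d. LNode a (add_mset d N)) (graft q s x) else {#})
    + image_mset (LNode a) (\<Sum>x'\<in>#graft q s x. graft_forest p x' N)"
    by (simp add: graft_LNode sum_mset.distrib image_mset_sum_mset image_mset.compositionality o_def)
  show ?case unfolding L R1 R2 forest by (simp add: ac_simps add_mset_commute)
qed

definition graft_sum :: "('a \<Rightarrow> bool) \<Rightarrow> 'a ltree \<Rightarrow> 'a ltree multiset \<Rightarrow> 'a ltree multiset" where
  "graft_sum p s R = (\<Sum>z\<in>#R. graft p s z)"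

lemma graft_sum_union[simp]: "graft_sum p s (A + B) = graft_sum p s A + graft_sum p s B"
  by (simp add: graft_sum_def)

lemma graft_sum_empty[simp]: "graft_sum p s {#} = {#}"
  by (simp add: graft_sum_def)

lemma graft_sum_single[simp]: "graft_sum p s {#T#} = graft p s T"
  by (simp add: graft_sum_def)

lemma graft_sum_sum: "graft_sum p s (sum F A) = (\<Sum>i\<in>A. graft_sum p s (F i))"
  by (induct A rule: infinite_finite_induct) auto

lemma graft_sum_sum_mset: "graft_sum p s (\<Sum>y\<in>#A. F y) = (\<Sum>y\<in>#A. graft_sum p s (F y))"
  unfolding graft_sum_def by (rule sum_mset_sum_mset_image)

definition graft_list :: "('a \<Rightarrow> bool) \<Rightarrow> 'a ltree list \<Rightarrow> 'a ltree \<Rightarrow> 'a ltree multiset" where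
  "graft_list p xs T = foldr (graft_sum p) xs {#T#}"

lemma graft_list_Nil[simp]: "graft_list p [] T = {#T#}"
  by (simp add: graft_list_def)

lemma graft_list_Cons[simp]: "graft_list p (x # xs) T = graft_sum p x (graft_list p xs T)"
  by (simp add: graft_list_def)

lemma graft_sum_commute:
  assumes "avoids p x" "avoids p y"
  shows "graft_sum p x (graft_sum p y R) = graft_sum p y (graft_sum p x R)"
proof -
  have "graft p x y = {#}" using assms(1,2) by (intro graft_avoids)
  then have "(\<Sum>z\<in>#graft p y w. graft p x z) = (\<Sum>z\<in>#graft p x w. graft p y z)" for w
    using graft_exchange[where p=p and s=x and x=y and q=p] assms(1) by simp
  then show ?thesis unfolding graft_sum_def sum_mset_sum_mset_image by simp
qed

lemma graft_list_move:
  assumes "avoids p x" "\<forall>y\<in>set ys1. avoids p y"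
  shows "graft_list p (ys1 @ x # ys2) T = graft_list p (x # ys1 @ ys2) T"
  using assms(2)
proof (induction ys1)
  case Nil
  then show ?case by simp
next
  case (Cons y ys1)
  then have "graft_list p ((y # ys1) @ x # ys2) T = graft_sum p y (graft_sum p x (graft_list p (ys1 @ ys2) T))"
    by simp
  also have "\<dots> = graft_sum p x (graft_sum p y (graft_list p (ys1 @ ys2) T))"
    using Cons.prems assms(1) by (intro graft_sum_commute) auto
  finally show ?case by simp
qed

lemma graft_list_perm:
  assumes "mset xs = mset ys" "\<forall>y\<in>set ys. avoids p y"
  shows "graft_list p xs T = graft_list p ys T"
  using assms
proof (induction xs arbitrary: ys)
  case Nil
  then show ?case by simp
next
  case (Cons x xs)
  have "x \<in> set ys" using Cons.prems(1) by (metis list.set_intros(1) set_mset_mset)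
  then obtain ys1 ys2 where ys: "ys = ys1 @ x # ys2" by (meson split_list)
  have m: "mset xs = mset (ys1 @ ys2)" using Cons.prems(1) ys by simp
  have "graft_list p ys T = graft_list p (x # ys1 @ ys2) T"
    unfolding ys using Cons.prems(2) ys by (intro graft_list_move) auto
  also have "\<dots> = graft_list p (x # xs) T"
    using Cons.IH[OF m] Cons.prems(2) ys by auto
  finally show ?case by simp
qed

lemma labels_graft_list: "z \<in># graft_list p xs T \<Longrightarrow> labels z \<subseteq> (\<Union>x\<in>set xs. labels x) \<union> labels T"
proof (induction xs arbitrary: z)
  case Nil
  then show ?case by simp
next
  case (Cons x xs)
  then obtain w where w: "w \<in># graft_list p xs T" "z \<in># graft p x w" by (auto simp: graft_sum_def)
  have "labels z \<subseteq> labels x \<union> labels w" using labels_graft w(2) .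
  then show ?case using Cons.IH[OF w(1)] by auto
qed

lemma size_graft_forest: "M \<in># graft_forest p x N \<Longrightarrow> size M = size N"
  by (auto dest!: in_graft_forest) (metis insert_DiffM size_add_mset)

lemma graft_list_root:
  "z \<in># graft_list p xs (LNode a N) \<Longrightarrow> \<exists>M. z = LNode a M \<and> size N \<le> size M"
proof (induction xs arbitrary: z)
  case Nil
  then show ?case by simp
next
  case (Cons x xs)
  then obtain w where w: "w \<in># graft_list p xs (LNode a N)" "z \<in># graft p x w" by (auto simp: graft_sum_def)
  then obtain M where M: "w = LNode a M" "size N \<le> size M" using Cons.IH by blast
  show ?case
    using w(2) M size_graft_forest[of _ p x M] by (auto simp: graft_LNode split: if_splits)
qed

text \<open>Grafting s under the vertices admitting p or q, after the list xs has been grafted under the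
  vertices admitting q: either s lands in T (so it could as well have been grafted with xs), or s lands
  in one of the xs.\<close>
lemma graft_after_graft_list:
  assumes "\<forall>x\<in>set xs. avoids q x" "avoids q s" "avoids p s" "avoids p T"
  shows "(\<Sum>z\<in>#graft_list q xs T. graft (\<lambda>a. p a \<or> q a) s z) =
         graft_list q (s # xs) T + (\<Sum>i<length xs. \<Sum>c'\<in>#graft p s (xs ! i). graft_list q (xs[i := c']) T)"
  using assms(1)
proof (induction xs)
  case Nil
  have "graft (\<lambda>a. p a \<or> q a) s T = graft q s T"
    using assms(4) by (intro graft_cong) (auto simp: avoids_def)
  then show ?case by simp
next
  case (Cons x xs)
  let ?pq = "\<lambda>a. p a \<or> q a"
  have xq: "avoids q x" and xsq: "\<forall>x\<in>set xs. avoids q x" using Cons.prems by auto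
  have xpq: "graft ?pq s x = graft p s x"
    using xq by (intro graft_cong) (auto simp: avoids_def)
  have "(\<Sum>z\<in>#graft_list q (x # xs) T. graft ?pq s z)
      = (\<Sum>w\<in>#graft_list q xs T. \<Sum>z\<in>#graft q x w. graft ?pq s z)"
    by (simp add: graft_sum_def sum_mset_sum_mset_image)
  also have "\<dots> = (\<Sum>w\<in>#graft_list q xs T. (\<Sum>z\<in>#graft ?pq s w. graft q x z) + (\<Sum>x'\<in>#graft ?pq s x. graft q x' w))"
    using graft_exchange[where p=q and s=s and x=x and q="?pq"] assms(2) by simp
  also have "\<dots> = graft_sum q x (\<Sum>w\<in>#graft_list q xs T. graft ?pq s w) + (\<Sum>x'\<in>#graft p s x. graft_list q (x' # xs) T)"
    by (simp add: sum_mset.distrib graft_sum_def sum_mset_sum_mset_image xpq sum_mset.swap[of _ _ "graft p s x"])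
  also have "\<dots> = graft_list q (x # s # xs) T
       + (\<Sum>i<length xs. \<Sum>c'\<in>#graft p s (xs ! i). graft_list q (x # xs[i := c']) T)
       + (\<Sum>x'\<in>#graft p s x. graft_list q (x' # xs) T)"
    unfolding Cons.IH[OF xsq] by (simp add: graft_sum_sum graft_sum_sum_mset)
  also have "graft_list q (x # s # xs) T = graft_list q (s # x # xs) T"
    using xq assms(2) by (simp add: graft_sum_commute)
  moreover have "(\<Sum>i<length (x # xs). \<Sum>c'\<in>#graft p s ((x # xs) ! i). graft_list q ((x # xs)[i := c']) T)
     = (\<Sum>x'\<in>#graft p s x. graft_list q (x' # xs) T) +
       (\<Sum>i<length xs. \<Sum>c'\<in>#graft p s (xs ! i). graft_list q (x # xs[i := c']) T)"
    unfolding length_Cons sum.lessThan_Suc_shift by simp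
  ultimately show ?case
    by (simp add: ac_simps)
qed

text \<open>Independent of the chosen enumeration of M only if the trees in M avoid p, see graft_list_perm.\<close>
definition graft_multiset :: "('a \<Rightarrow> bool) \<Rightarrow> 'a ltree multiset \<Rightarrow> 'a ltree \<Rightarrow> 'a ltree multiset" where
  "graft_multiset p M T = graft_list p (SOME xs. mset xs = M) T"

lemma graft_multiset_mset:
  assumes "\<forall>x\<in>set xs. avoids p x"
  shows "graft_multiset p (mset xs) T = graft_list p xs T"
proof -
  have m: "mset (SOME ys. mset ys = mset xs) = mset xs" by (rule someI) simp
  then have "set (SOME ys. mset ys = mset xs) = set xs" by (metis set_mset_mset)
  then show ?thesis unfolding graft_multiset_def using graft_list_perm[OF m] assms by simp
qed

lemma graft_multiset_graft:
  assumes "\<forall>c\<in>#X. avoids q c" "avoids q s" "avoids p s" "avoids p T" "p a"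
  shows "(\<Sum>y\<in>#graft p s (LNode a X). graft_multiset q (children y) T)
       = (\<Sum>z\<in>#graft_multiset q X T. graft (\<lambda>b. p b \<or> q b) s z)"
proof -
  obtain xs where mxs: "X = mset xs" by (metis ex_mset)
  have xs: "\<forall>c\<in>set xs. avoids q c" using assms(1) mxs by simp
  have upd: "graft_list q (xs[i := c']) T = graft_multiset q (mset (xs[i := c'])) T"
    if "i < length xs" "c' \<in># graft p s (xs ! i)" for i c'
  proof -
    have "avoids q c'" using avoids_graft[OF assms(2) _ that(2)] xs that(1) by auto
    then have "\<forall>c\<in>set (xs[i := c']). avoids q c" using xs set_update_subset_insert[of xs i c'] by blast
    then show ?thesis using graft_multiset_mset by metis
  qed
  have "(\<Sum>z\<in>#graft_multiset q X T. graft (\<lambda>b. p b \<or> q b) s z)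
      = graft_list q (s # xs) T + (\<Sum>i<length xs. \<Sum>c'\<in>#graft p s (xs ! i). graft_list q (xs[i := c']) T)"
    unfolding mxs graft_multiset_mset[OF xs] by (rule graft_after_graft_list[OF xs assms(2-4)])
  also have "graft_list q (s # xs) T = graft_multiset q (add_mset s X) T"
    using graft_multiset_mset[of "s # xs" q T] xs assms(2) mxs by simp
  also have "(\<Sum>i<length xs. \<Sum>c'\<in>#graft p s (xs ! i). graft_list q (xs[i := c']) T)
      = (\<Sum>i<length xs. \<Sum>c'\<in>#graft p s (xs ! i). graft_multiset q (mset (xs[i := c'])) T)"
    by (intro sum.cong refl arg_cong[where f=sum_mset] image_mset_cong upd) auto
  also have "\<dots> = (\<Sum>M\<in>#graft_forest p s X. graft_multiset q M T)"
    unfolding mxs graft_forest_mset sum_mset_image_sum by (simp add: image_mset.compositionality o_def)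
  also have "graft_multiset q (add_mset s X) T + (\<Sum>M\<in>#graft_forest p s X. graft_multiset q M T)
      = (\<Sum>y\<in>#graft p s (LNode a X). graft_multiset q (children y) T)"
    using assms(5) by (simp add: graft_LNode image_mset.compositionality o_def)
  finally show ?thesis ..
qed

lemma graft_list_assoc:
  assumes as: "\<forall>a\<in>set as. avoids p a \<and> avoids q a"
    and bs: "\<forall>b\<in>set bs. avoids q b" and T: "avoids p T" and r: "p r" and qr: "\<not> q r"
  shows "(\<Sum>x\<in>#graft_list p as (LNode r (mset bs)). graft_multiset q (children x) T)
       = (\<Sum>y\<in>#graft_list q bs T. graft_list (\<lambda>b. p b \<or> q b) as y)"
  using as
proof (induction as)
  case Nil
  then show ?case using graft_multiset_mset[of bs q T] bs by simp
next
  case (Cons s as)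
  let ?pq = "\<lambda>b. p b \<or> q b"
  have step: "(\<Sum>y\<in>#graft p s x. graft_multiset q (children y) T) = (\<Sum>z\<in>#graft_multiset q (children x) T. graft ?pq s z)"
    if x: "x \<in># graft_list p as (LNode r (mset bs))" for x
  proof -
    obtain X where xX: "x = LNode r X" using graft_list_root[OF x] by blast
    let ?L = "(\<Union>a\<in>set as. labels a) \<union> insert r (\<Union>b\<in>set bs. labels b)"
    have "\<forall>c\<in>#X. avoids q c"
    proof
      fix c assume "c \<in># X"
      then have "labels c \<subseteq> ?L" using xX labels_graft_list[OF x] by auto
      moreover have "\<not> q b" if "b \<in> ?L" for b
        using that Cons.prems bs qr by (auto simp: avoids_def)
      ultimately show "avoids q c" unfolding avoids_def by blast
    qed
    with Cons.prems T r show ?thesis unfolding xX children.simps by (intro graft_multiset_graft) auto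
  qed
  have "(\<Sum>x\<in>#graft_list p (s # as) (LNode r (mset bs)). graft_multiset q (children x) T)
      = (\<Sum>x\<in>#graft_list p as (LNode r (mset bs)). \<Sum>y\<in>#graft p s x. graft_multiset q (children y) T)"
    by (simp add: graft_sum_def sum_mset_sum_mset_image)
  also have "\<dots> = (\<Sum>x\<in>#graft_list p as (LNode r (mset bs)). \<Sum>z\<in>#graft_multiset q (children x) T. graft ?pq s z)"
    by (intro arg_cong[where f=sum_mset] image_mset_cong step)
  also have "\<dots> = graft_sum ?pq s (\<Sum>x\<in>#graft_list p as (LNode r (mset bs)). graft_multiset q (children x) T)"
    by (simp add: graft_sum_def sum_mset_sum_mset_image)
  also have "\<dots> = graft_sum ?pq s (\<Sum>y\<in>#graft_list q bs T. graft_list ?pq as y)"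
    using Cons by simp
  also have "\<dots> = (\<Sum>y\<in>#graft_list q bs T. graft_list ?pq (s # as) y)"
    by (simp add: graft_sum_sum_mset)
  finally show ?case .
qed

section \<open>The Grossman--Larson product of two trees as a grafting\<close>

primrec ltree_of_ftree :: "ftree \<Rightarrow> bool ltree" where
  "ltree_of_ftree (FNode b N) = LNode b (image_mset ltree_of_ftree N)"

primrec ftree_of_ltree :: "bool ltree \<Rightarrow> ftree" where
  "ftree_of_ltree (LNode b N) = FNode b (image_mset ftree_of_ltree N)"

lemma ftree_of_ltree_of_ftree[simp]: "ftree_of_ltree (ltree_of_ftree T) = T"
  by (induction T) (auto simp: image_mset.compositionality o_def intro: image_mset_cong[where g=id, simplified])

primrec label_tree :: "'a \<Rightarrow> rtree \<Rightarrow> 'a ltree" where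
  "label_tree a (Node N) = LNode a (image_mset (label_tree a) N)"

primrec unlabel :: "'a ltree \<Rightarrow> rtree" where
  "unlabel (LNode a N) = Node (image_mset unlabel N)"

lemma ltree_of_ftree_mark[simp]: "ltree_of_ftree (mark b t) = label_tree b t"
  by (induction t) (auto simp: image_mset.compositionality o_def intro!: image_mset_cong)

lemma unmark_eq_unlabel: "unmark T = unlabel (ltree_of_ftree T)"
  by (induction T) (auto simp: image_mset.compositionality o_def intro!: image_mset_cong)

lemma unlabel_label_tree[simp]: "unlabel (label_tree a t) = t"
  by (induction t) (auto simp: image_mset.compositionality o_def intro: image_mset_cong[where g=id, simplified])

lemma map_unlabel_label_tree[simp]: "map unlabel (map (label_tree a) xs) = xs"
  by (induct xs) auto

lemma labels_label_tree[simp]: "labels (label_tree a t) = {a}"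
  by (induction t) auto

lemma unlabel_map_ltree[simp]: "unlabel (map_ltree f T) = unlabel T"
  by (induction T) (auto simp: image_mset.compositionality o_def intro!: image_mset_cong)

lemma map_ltree_const: "\<forall>a\<in>labels T. f a = b \<Longrightarrow> map_ltree f T = label_tree b (unlabel T)"
  by (induction T) (auto simp: image_mset.compositionality o_def intro!: image_mset_cong)

lemma ins_FNode: "ins s (FNode b N) = (if b then {# FNode b (add_mset s N) #} else {#}) +
   (\<Sum>c\<in>#N. image_mset (\<lambda>c'. FNode b (add_mset c' (N - {#c#}))) (ins s c))"
  unfolding ins.simps[of s b N] by (simp cong: image_mset_cong)

lemma graft_forest_image_mset: "graft_forest p s (image_mset f N) =
  (\<Sum>c\<in>#N. image_mset (\<lambda>c'. add_mset c' (image_mset f N - {#f c#})) (graft p s (f c)))"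
  unfolding graft_forest_def by (simp add: image_mset.compositionality o_def)

lemma ltree_of_ftree_ins: "image_mset ltree_of_ftree (ins s T) = graft (\<lambda>b. b) (ltree_of_ftree s) (ltree_of_ftree T)"
proof (induction T)
  case (FNode b N)
  have IH: "image_mset (\<lambda>c'. LNode b (add_mset c' (image_mset ltree_of_ftree (N - {#c#})))) (image_mset ltree_of_ftree (ins s c))
      = image_mset (\<lambda>c'. LNode b (add_mset c' (image_mset ltree_of_ftree N - {#ltree_of_ftree c#})))
          (graft (\<lambda>b. b) (ltree_of_ftree s) (ltree_of_ftree c))" if c: "c \<in># N" for c
    using FNode.IH[OF c] c by (simp add: image_mset_Diff)
  have "image_mset ltree_of_ftree (ins s (FNode b N)) = (if b then {#LNode b (add_mset (ltree_of_ftree s) (image_mset ltree_of_ftree N))#} else {#})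
    + (\<Sum>c\<in>#N. image_mset (\<lambda>c'. LNode b (add_mset c' (image_mset ltree_of_ftree (N - {#c#})))) (image_mset ltree_of_ftree (ins s c)))"
    unfolding ins_FNode by (simp add: image_mset_sum_mset image_mset.compositionality o_def)
  also have "(\<Sum>c\<in>#N. image_mset (\<lambda>c'. LNode b (add_mset c' (image_mset ltree_of_ftree (N - {#c#})))) (image_mset ltree_of_ftree (ins s c)))
     = (\<Sum>c\<in>#N. image_mset (\<lambda>c'. LNode b (add_mset c' (image_mset ltree_of_ftree N - {#ltree_of_ftree c#})))
          (graft (\<lambda>b. b) (ltree_of_ftree s) (ltree_of_ftree c)))"
    by (intro arg_cong[where f=sum_mset] image_mset_cong IH)
  finally show ?case
    by (simp add: graft_LNode graft_forest_image_mset image_mset_sum_mset image_mset.compositionality o_def)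
qed

definition gl_attach :: "rtree \<Rightarrow> ftree multiset \<Rightarrow> ftree multiset" where
  "gl_attach s R = sum_mset (image_mset (ins (mark False s)) R)"

lemma ltree_of_ftree_gl_attach:
  "image_mset ltree_of_ftree (gl_attach s R) = graft_sum (\<lambda>b. b) (label_tree False s) (image_mset ltree_of_ftree R)"
  unfolding gl_attach_def graft_sum_def
  by (simp add: image_mset_sum_mset ltree_of_ftree_ins image_mset.compositionality o_def)

lemma comp_fun_commute_gl_attach: "comp_fun_commute gl_attach"
proof
  fix x y
  show "gl_attach y \<circ> gl_attach x = gl_attach x \<circ> gl_attach y"
  proof
    fix R
    have "image_mset ltree_of_ftree (gl_attach y (gl_attach x R)) = image_mset ltree_of_ftree (gl_attach x (gl_attach y R))"
      unfolding ltree_of_ftree_gl_attach by (rule graft_sum_commute) (auto simp: avoids_def)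
    then have "image_mset ftree_of_ltree (image_mset ltree_of_ftree (gl_attach y (gl_attach x R)))
             = image_mset ftree_of_ltree (image_mset ltree_of_ftree (gl_attach x (gl_attach y R)))"
      by simp
    then show "(gl_attach y \<circ> gl_attach x) R = (gl_attach x \<circ> gl_attach y) R"
      by (simp add: image_mset.compositionality o_def)
  qed
qed

lemma gl_trees_graft_list:
  "gl_trees (Node (mset cs)) t' = image_mset unlabel (graft_list (\<lambda>b. b) (map (label_tree False) cs) (label_tree True t'))"
proof -
  interpret comp_fun_commute gl_attach by (rule comp_fun_commute_gl_attach)
  have "fold_mset gl_attach {#mark True t'#} (mset cs) = foldr gl_attach cs {#mark True t'#}"
    by (induction cs) auto
  moreover have "gl_trees (Node (mset cs)) t' = image_mset unmark (fold_mset gl_attach {#mark True t'#} (mset cs))"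
    unfolding gl_trees_def gl_attach_def by simp
  ultimately have "gl_trees (Node (mset cs)) t' = image_mset unmark (foldr gl_attach cs {#mark True t'#})"
    by simp
  also have "image_mset ltree_of_ftree (foldr gl_attach cs {#mark True t'#})
      = graft_list (\<lambda>b. b) (map (label_tree False) cs) (label_tree True t')"
    by (induction cs) (simp_all add: ltree_of_ftree_gl_attach)
  then have "image_mset unmark (foldr gl_attach cs {#mark True t'#})
      = image_mset unlabel (graft_list (\<lambda>b. b) (map (label_tree False) cs) (label_tree True t'))"
    by (metis (no_types, lifting) image_mset.comp unmark_eq_unlabel comp_def image_mset_cong)
  finally show ?thesis .
qed

lemma image_graft_map_ltree:
  "image_mset (map_ltree f) (graft (q \<circ> f) s T) = graft q (map_ltree f s) (map_ltree f T)"
proof (induction T)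
  case (LNode a N)
  have IH: "image_mset (\<lambda>c'. add_mset c' (image_mset (map_ltree f) (N - {#c#}))) (image_mset (map_ltree f) (graft (q \<circ> f) s c))
      = image_mset (\<lambda>c'. add_mset c' (image_mset (map_ltree f) N - {#map_ltree f c#})) (graft q (map_ltree f s) (map_ltree f c))"
    if c: "c \<in># N" for c
    using LNode.IH[OF c] c by (simp add: image_mset_Diff comp_def)
  have "image_mset (image_mset (map_ltree f)) (graft_forest (q \<circ> f) s N)
      = (\<Sum>c\<in>#N. image_mset (\<lambda>c'. add_mset c' (image_mset (map_ltree f) (N - {#c#}))) (image_mset (map_ltree f) (graft (q \<circ> f) s c)))"
    unfolding graft_forest_def by (simp add: image_mset_sum_mset image_mset.compositionality o_def)
  also have "\<dots> = graft_forest q (map_ltree f s) (image_mset (map_ltree f) N)"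
    unfolding graft_forest_image_mset by (intro arg_cong[where f=sum_mset] image_mset_cong IH)
  finally have forest: "image_mset (image_mset (map_ltree f)) (graft_forest (q \<circ> f) s N)
      = graft_forest q (map_ltree f s) (image_mset (map_ltree f) N)" .
  show ?case
    by (simp add: graft_LNode forest[symmetric] image_mset.compositionality o_def)
qed

lemma image_graft_list_map_ltree:
  "image_mset (map_ltree f) (graft_list (q \<circ> f) xs T) = graft_list q (map (map_ltree f) xs) (map_ltree f T)"
proof (induction xs)
  case Nil
  then show ?case by simp
next
  case (Cons x xs)
  then show ?case
    by (simp add: graft_sum_def image_mset_sum_mset image_mset.compositionality o_def
        image_graft_map_ltree[symmetric] flip: Cons.IH)
qed

lemma gl_trees_graft_list_labels:
  assumes "\<forall>c\<in>set xs. avoids p c" "\<forall>a\<in>labels T. p a"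
  shows "gl_trees (Node (mset (map unlabel xs))) (unlabel T) = image_mset unlabel (graft_list p xs T)"
proof -
  have "image_mset unlabel (graft_list p xs T)
      = image_mset unlabel (image_mset (map_ltree p) (graft_list ((\<lambda>b. b) \<circ> p) xs T))"
    by (simp add: image_mset.compositionality o_def)
  also have "\<dots> = image_mset unlabel (graft_list (\<lambda>b. b) (map (map_ltree p) xs) (map_ltree p T))"
    by (simp only: image_graft_list_map_ltree)
  also have "map (map_ltree p) xs = map (label_tree False) (map unlabel xs)"
    using assms(1) by (auto simp: avoids_def map_ltree_const)
  also have "map_ltree p T = label_tree True (unlabel T)"
    using assms(2) by (simp add: map_ltree_const)
  finally have "image_mset unlabel (graft_list p xs T) =
      image_mset unlabel (graft_list (\<lambda>b. b) (map (label_tree False) (map unlabel xs)) (label_tree True (unlabel T)))" .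
  then show ?thesis by (simp only: gl_trees_graft_list)
qed

lemma gl_trees_graft_multiset:
  assumes "\<forall>c\<in>#children x. avoids p c" "\<forall>a\<in>labels T. p a"
  shows "gl_trees (unlabel x) (unlabel T) = image_mset unlabel (graft_multiset p (children x) T)"
proof -
  obtain a xs where x: "x = LNode a (mset xs)" by (metis ex_mset children.simps ltree.exhaust)
  then have "unlabel x = Node (mset (map unlabel xs))" by simp
  then show ?thesis
    using assms x gl_trees_graft_list_labels[of xs p T] graft_multiset_mset[of xs p T] by simp
qed

lemma sum_gl_trees_left_graft:
  assumes as: "\<forall>a\<in>set as. avoids p a \<and> avoids q a"
    and bs: "\<forall>b\<in>set bs. avoids q b \<and> (\<forall>a\<in>labels b. p a)"
    and r: "p r" "\<not> q r" and T: "\<forall>a\<in>labels T. q a"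
  shows "(\<Sum>m\<in>#gl_trees (Node (mset (map unlabel as))) (Node (mset (map unlabel bs))). gl_trees m (unlabel T))
       = image_mset unlabel (\<Sum>x\<in>#graft_list p as (LNode r (mset bs)). graft_multiset q (children x) T)"
    (is "?L = image_mset unlabel (\<Sum>x\<in>#?G. _)")
proof -
  have ab: "gl_trees (Node (mset (map unlabel as))) (unlabel (LNode r (mset bs))) = image_mset unlabel ?G"
    by (rule gl_trees_graft_list_labels) (use as bs r in \<open>auto simp: avoids_def\<close>)
  have x: "gl_trees (unlabel x) (unlabel T) = image_mset unlabel (graft_multiset q (children x) T)"
    if x: "x \<in># ?G" for x
  proof (rule gl_trees_graft_multiset[OF _ T], rule)
    fix c assume c: "c \<in># children x"
    let ?A = "(\<Union>a\<in>set as. labels a) \<union> labels (LNode r (mset bs))"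
    obtain M where "x = LNode r M" using graft_list_root[OF x] by blast
    with c have "labels c \<subseteq> labels x" by auto
    also have "\<dots> \<subseteq> ?A" by (rule labels_graft_list[OF x])
    moreover have "\<not> q a" if "a \<in> ?A" for a
      using that as bs r(2) by (auto simp: avoids_def)
    ultimately show "avoids q c" unfolding avoids_def by blast
  qed
  have "?L = (\<Sum>x\<in>#?G. gl_trees (unlabel x) (unlabel T))"
    using ab by (simp only: unlabel.simps mset_map image_mset.compositionality o_def)
  also have "\<dots> = (\<Sum>x\<in>#?G. image_mset unlabel (graft_multiset q (children x) T))"
    by (intro arg_cong[where f=sum_mset] image_mset_cong x)
  finally show ?thesis by (simp only: image_mset_sum_mset image_mset.compositionality o_def)
qed

lemma sum_gl_trees_right_graft:
  assumes as: "\<forall>a\<in>set as. avoids p a \<and> avoids q a"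
    and bs: "\<forall>b\<in>set bs. avoids q b \<and> (\<forall>a\<in>labels b. p a)" and T: "\<forall>a\<in>labels T. q a"
  shows "(\<Sum>m\<in>#gl_trees (Node (mset (map unlabel bs))) (unlabel T). gl_trees (Node (mset (map unlabel as))) m)
       = image_mset unlabel (\<Sum>y\<in>#graft_list q bs T. graft_list (\<lambda>a. p a \<or> q a) as y)"
    (is "?L = image_mset unlabel (\<Sum>y\<in>#?G. _)")
proof -
  have bc: "gl_trees (Node (mset (map unlabel bs))) (unlabel T) = image_mset unlabel ?G"
    by (rule gl_trees_graft_list_labels) (use bs T in auto)
  have y: "gl_trees (Node (mset (map unlabel as))) (unlabel y)
      = image_mset unlabel (graft_list (\<lambda>a. p a \<or> q a) as y)" if y: "y \<in># ?G" for y
  proof (rule gl_trees_graft_list_labels)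
    show "\<forall>a\<in>labels y. p a \<or> q a" using labels_graft_list[OF y] bs T by blast
  qed (use as in \<open>auto simp: avoids_def\<close>)
  have "?L = (\<Sum>y\<in>#?G. gl_trees (Node (mset (map unlabel as))) (unlabel y))"
    unfolding bc by (simp only: image_mset.compositionality o_def)
  also have "\<dots> = (\<Sum>y\<in>#?G. image_mset unlabel (graft_list (\<lambda>a. p a \<or> q a) as y))"
    by (intro arg_cong[where f=sum_mset] image_mset_cong y)
  finally show ?thesis by (simp only: image_mset_sum_mset image_mset.compositionality o_def)
qed

text \<open>Label the vertices of a, b and c by 0, 1 and 2: both sides of associativity then become
  instances of graft_list_assoc.\<close>
lemma gl_trees_assoc: "(\<Sum>m\<in>#gl_trees a b. gl_trees m c) = (\<Sum>m\<in>#gl_trees b c. gl_trees a m)"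
proof -
  obtain as bs where ab: "a = Node (mset as)" "b = Node (mset bs)" by (metis ex_mset rtree.exhaust)
  define as' where "as' = map (label_tree (0::nat)) as"
  define bs' where "bs' = map (label_tree (1::nat)) bs"
  define T where "T = label_tree (2::nat) c"
  let ?p = "\<lambda>n::nat. n = 1" and ?q = "\<lambda>n::nat. n = 2"
  have as': "\<forall>a\<in>set as'. avoids ?p a \<and> avoids ?q a"
    and bs': "\<forall>b\<in>set bs'. avoids ?q b \<and> (\<forall>a\<in>labels b. ?p a)"
    and T: "avoids ?p T" "\<forall>a\<in>labels T. ?q a"
    by (auto simp: as'_def bs'_def T_def avoids_def)
  have unlabel: "a = Node (mset (map unlabel as'))" "b = Node (mset (map unlabel bs'))" "c = unlabel T"
    by (simp_all only: ab as'_def bs'_def T_def map_unlabel_label_tree unlabel_label_tree)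
  have "(\<Sum>m\<in>#gl_trees a b. gl_trees m c)
      = image_mset unlabel (\<Sum>x\<in>#graft_list ?p as' (LNode 1 (mset bs')). graft_multiset ?q (children x) T)"
    unfolding unlabel by (rule sum_gl_trees_left_graft[OF as' bs' _ _ T(2)]) simp_all
  also have "\<dots> = image_mset unlabel (\<Sum>y\<in>#graft_list ?q bs' T. graft_list (\<lambda>a. ?p a \<or> ?q a) as' y)"
    using graft_list_assoc[of as' ?p ?q bs' T 1] as' bs' T by simp
  also have "\<dots> = (\<Sum>m\<in>#gl_trees b c. gl_trees a m)"
    unfolding unlabel by (rule sum_gl_trees_right_graft[OF as' bs' T(2), symmetric])
  finally show ?thesis .
qed

section \<open>Products with a bullet or a single-child tree\<close>

lemma gl_trees_bullet_left: "gl_trees bullet t' = {#t'#}"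
  unfolding gl_trees_def by (simp add: unmark_eq_unlabel)

lemma graft_list_no_place:
  assumes "\<forall>x\<in>set xs. avoids p x" "p b" "\<forall>c\<in>#N. avoids p c"
  shows "graft_list p xs (LNode b N) = {#LNode b (N + mset xs)#}"
  using assms(1)
proof (induction xs)
  case Nil
  then show ?case by simp
next
  case (Cons x xs)
  have "graft p x c = {#}" if "c \<in># N + mset xs" for c
    using that Cons.prems assms(3) by (intro graft_avoids) auto
  then have "graft_forest p x (N + mset xs) = {#}"
    unfolding graft_forest_def by (intro sum_mset.neutral) auto
  then show ?case using Cons assms(2) by (simp add: graft_LNode)
qed

lemma gl_trees_bullet_right: "gl_trees t bullet = {#t#}"
proof -
  obtain cs where t: "t = Node (mset cs)" by (metis ex_mset rtree.exhaust)
  have "graft_list (\<lambda>b. b) (map (label_tree False) cs) (LNode True {#}) = {#LNode True (mset (map (label_tree False) cs))#}"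
    by (subst graft_list_no_place) (auto simp: avoids_def)
  then show ?thesis unfolding t gl_trees_graft_list
    by (simp add: image_mset.compositionality o_def)
qed

text \<open>Grafting never removes children of the root, so the results with exactly one child at the root
  come from grafting onto the subtree below a root with one child.\<close>
lemma filter_graft_list_single_child:
  "filter_mset (\<lambda>z. size (children z) = 1) (graft_list p xs (LNode b {#S#}))
   = image_mset (\<lambda>z. LNode b {#z#}) (graft_list p xs S)"
proof (induction xs)
  case Nil
  then show ?case by simp
next
  case (Cons x xs)
  let ?P = "\<lambda>z. size (children z) = 1"
  have step: "filter_mset ?P (graft p x w) = (if ?P w then image_mset (LNode b) (graft_forest p x (children w)) else {#})"
    if w: "w \<in># graft_list p xs (LNode b {#S#})" for w
  proof -
    obtain M where M: "w = LNode b M" "1 \<le> size M" using graft_list_root[OF w] by auto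
    have "filter_mset ?P (image_mset (LNode b) (graft_forest p x M))
        = filter_mset (\<lambda>_. size M = 1) (image_mset (LNode b) (graft_forest p x M))"
      by (rule filter_mset_cong0) (auto dest: size_graft_forest)
    moreover have "\<not> ?P (LNode b (add_mset x M))" using M(2) by auto
    ultimately show ?thesis using M by (auto simp: graft_LNode)
  qed
  have "filter_mset ?P (graft_list p (x # xs) (LNode b {#S#}))
      = (\<Sum>w\<in>#graft_list p xs (LNode b {#S#}). filter_mset ?P (graft p x w))"
    by (simp add: graft_sum_def filter_mset_sum_mset image_mset.compositionality o_def)
  also have "\<dots> = (\<Sum>w\<in>#graft_list p xs (LNode b {#S#}). if ?P w then image_mset (LNode b) (graft_forest p x (children w)) else {#})"
    by (intro arg_cong[where f=sum_mset] image_mset_cong step)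
  also have "\<dots> = (\<Sum>w\<in>#filter_mset ?P (graft_list p xs (LNode b {#S#})). image_mset (LNode b) (graft_forest p x (children w)))"
    by (rule sum_mset_image_filter_mset[symmetric])
  also have "\<dots> = (\<Sum>z\<in>#graft_list p xs S. image_mset (\<lambda>z. LNode b {#z#}) (graft p x z))"
    unfolding Cons.IH by (simp add: image_mset.compositionality o_def graft_forest_add_mset)
  also have "\<dots> = image_mset (\<lambda>z. LNode b {#z#}) (graft_list p (x # xs) S)"
    by (simp add: graft_sum_def image_mset_sum_mset image_mset.compositionality o_def)
  finally show ?case .
qed

lemma count_unlabel_single_child: "count (image_mset unlabel R) (Node {#r#}) =
  count (image_mset unlabel (filter_mset (\<lambda>z. size (children z) = 1) R)) (Node {#r#})"
proof -
  let ?P = "\<lambda>z. size (children z) = 1"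
  have "Node {#r#} \<notin># image_mset unlabel (filter_mset (\<lambda>z. \<not> ?P z) R)"
  proof
    assume "Node {#r#} \<in># image_mset unlabel (filter_mset (\<lambda>z. \<not> ?P z) R)"
    then have "Node {#r#} \<in> unlabel ` set_mset (filter_mset (\<lambda>z. \<not> ?P z) R)" by (simp only: set_image_mset)
    then obtain z where "z \<in> set_mset (filter_mset (\<lambda>z. \<not> ?P z) R)" "Node {#r#} = unlabel z"
      by (rule imageE)
    then show False by (cases z) (auto dest: arg_cong[where f=size])
  qed
  moreover have "image_mset unlabel R = image_mset unlabel (filter_mset ?P R) + image_mset unlabel (filter_mset (\<lambda>z. \<not> ?P z) R)"
    by (metis image_mset_union multiset_partition)
  ultimately show ?thesis by (simp add: count_eq_zero_iff)
qed

lemma count_gl_trees_single_child: "count (gl_trees t (Node {#s#})) (Node {#r#}) = count (gl_trees t s) r"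
proof -
  obtain cs where t: "t = Node (mset cs)" by (metis ex_mset rtree.exhaust)
  let ?xs = "map (label_tree False) cs"
  have "count (gl_trees t (Node {#s#})) (Node {#r#}) =
     count (image_mset unlabel (filter_mset (\<lambda>z. size (children z) = 1)
       (graft_list (\<lambda>b. b) ?xs (LNode True {#label_tree True s#})))) (Node {#r#})"
    unfolding t gl_trees_graft_list by (subst count_unlabel_single_child) simp
  also have "\<dots> = count (image_mset (\<lambda>u. Node {#u#}) (image_mset unlabel (graft_list (\<lambda>b. b) ?xs (label_tree True s)))) (Node {#r#})"
    unfolding filter_graft_list_single_child by (simp add: image_mset.compositionality o_def)
  also have "\<dots> = count (gl_trees t s) r"
    unfolding t gl_trees_graft_list by (rule count_image_mset_inj) (simp add: inj_def)
  finally show ?thesis .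
qed

lemma gl_trees_size_children:
  assumes "m \<in># gl_trees t (Node N)"
  obtains M where "m = Node M" "size N \<le> size M"
proof -
  obtain cs where t: "t = Node (mset cs)" by (metis ex_mset rtree.exhaust)
  from assms obtain z where "z \<in># graft_list (\<lambda>b. b) (map (label_tree False) cs) (LNode True (image_mset (label_tree True) N))"
      "m = unlabel z"
    unfolding t gl_trees_graft_list by auto
  then show ?thesis using that by (auto dest!: graft_list_root)
qed

lemma count_gl_trees_single_child_many:
  assumes "2 \<le> size N"
  shows "count (gl_trees t (Node N)) (Node {#r#}) = 0"
proof -
  have "Node {#r#} \<notin># gl_trees t (Node N)"
  proof
    assume "Node {#r#} \<in># gl_trees t (Node N)"
    then obtain M where "Node {#r#} = Node M" "size N \<le> size M" by (rule gl_trees_size_children)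
    with assms show False by auto
  qed
  then show ?thesis by (simp add: count_eq_zero_iff)
qed

lemma count_gl_trees_bullet: "count (gl_trees t t') bullet = (if t = bullet \<and> t' = bullet then 1 else 0)"
proof (cases "t' = bullet")
  case True
  then show ?thesis by (auto simp: gl_trees_bullet_right)
next
  case False
  then obtain N where "t' = Node N" "N \<noteq> {#}" by (metis rtree.exhaust)
  then have "bullet \<notin># gl_trees t t'" by (metis gl_trees_size_children rtree.inject le_zero_eq size_empty size_eq_0_iff_empty)
  then show ?thesis using False by (simp add: count_eq_zero_iff)
qed

definition sole_child :: "rtree \<Rightarrow> rtree" where
  "sole_child t = (case t of Node N \<Rightarrow> (SOME s. N = {#s#}))"

lemma sole_child_Node[simp]: "sole_child (Node {#s#}) = s"
  unfolding sole_child_def by simp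

lemma count_gl_trees_single_child_tree: "count (gl_trees t t') (Node {#r#}) =
   (if t' = bullet \<and> t = Node {#r#} then 1 else 0) +
   (if t' \<in> range (\<lambda>s. Node {#s#}) then count (gl_trees t (sole_child t')) r else 0)"
proof -
  obtain N where t': "t' = Node N" by (cases t')
  consider "N = {#}" | s where "N = {#s#}" | "2 \<le> size N"
    by (metis One_nat_def less_2_cases not_le size_1_singleton_mset size_eq_0_iff_empty)
  then show ?thesis
  proof cases
    case 1
    then show ?thesis using t' by (auto simp: gl_trees_bullet_right)
  next
    case 2
    then show ?thesis using t' by (auto simp: count_gl_trees_single_child)
  next
    case 3
    then have "t' \<notin> range (\<lambda>s. Node {#s#})" "t' \<noteq> bullet" using t' by auto
    then show ?thesis using count_gl_trees_single_child_many[OF 3] t' by simp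
  qed
qed

section \<open>Symmetry factors\<close>

definition addr_auts :: "nat list set \<Rightarrow> (nat list \<Rightarrow> nat list) set" where
  "addr_auts V = {f. bij_betw f V V \<and> (\<forall>a. a \<notin> V \<longrightarrow> f a = a)
              \<and> (\<forall>v\<in>V. \<forall>w\<in>V. prefix w v \<longleftrightarrow> prefix (f w) (f v))}"

lemma paut_eq_addr_auts: "paut p = addr_auts (pverts p)"
  unfolding paut_def addr_auts_def vle_def by simp

definition addr_iso :: "nat list set \<Rightarrow> nat list set \<Rightarrow> (nat list \<Rightarrow> nat list) \<Rightarrow> (nat list \<Rightarrow> nat list) \<Rightarrow> bool" where
  "addr_iso V W \<phi> \<psi> \<longleftrightarrow> (\<forall>v\<in>V. \<phi> v \<in> W \<and> \<psi> (\<phi> v) = v) \<and> (\<forall>w\<in>W. \<psi> w \<in> V \<and> \<phi> (\<psi> w) = w)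
     \<and> (\<forall>v\<in>V. \<forall>w\<in>V. prefix w v \<longleftrightarrow> prefix (\<phi> w) (\<phi> v))"

lemma addr_iso_sym: "addr_iso V W \<phi> \<psi> \<Longrightarrow> addr_iso W V \<psi> \<phi>"
  unfolding addr_iso_def by metis

lemma addr_auts_conj:
  assumes iso: "addr_iso V W \<phi> \<psi>" and f: "f \<in> addr_auts V"
  shows "(\<lambda>a. if a \<in> W then \<phi> (f (\<psi> a)) else a) \<in> addr_auts W"
proof -
  let ?h = "\<lambda>a. if a \<in> W then \<phi> (f (\<psi> a)) else a"
  have bpsi: "bij_betw \<psi> W V" by (rule bij_betw_byWitness[where f'=\<phi>]) (use iso in \<open>auto simp: addr_iso_def\<close>)
  have bphi: "bij_betw \<phi> V W" by (rule bij_betw_byWitness[where f'=\<psi>]) (use iso in \<open>auto simp: addr_iso_def\<close>)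
  have bf: "bij_betw f V V" using f by (simp add: addr_auts_def)
  have "bij_betw ((\<phi> \<circ> f) \<circ> \<psi>) W W" using bij_betw_trans[OF bpsi bij_betw_trans[OF bf bphi]] .
  then have b: "bij_betw ?h W W" by (rule bij_betw_cong[THEN iffD1, rotated]) auto
  have fV: "\<And>v. v \<in> V \<Longrightarrow> f v \<in> V" using bf by (meson bij_betwE)
  have ord: "prefix w v \<longleftrightarrow> prefix (?h w) (?h v)" if "v \<in> W" "w \<in> W" for v w
  proof -
    have pv: "\<psi> v \<in> V" "\<psi> w \<in> V" using that iso by (auto simp: addr_iso_def)
    have "prefix w v \<longleftrightarrow> prefix (\<psi> w) (\<psi> v)"
      using iso pv that unfolding addr_iso_def by metis
    also have "\<dots> \<longleftrightarrow> prefix (f (\<psi> w)) (f (\<psi> v))" using f pv by (simp add: addr_auts_def)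
    also have "\<dots> \<longleftrightarrow> prefix (\<phi> (f (\<psi> w))) (\<phi> (f (\<psi> v)))"
      using iso fV[OF pv(1)] fV[OF pv(2)] unfolding addr_iso_def by metis
    finally show ?thesis using that by simp
  qed
  show ?thesis unfolding addr_auts_def using b ord by auto
qed

lemma addr_auts_conj_inverse:
  assumes iso: "addr_iso V W \<phi> \<psi>" and f: "f \<in> addr_auts V"
  shows "(\<lambda>a. if a \<in> V then \<psi> ((\<lambda>a. if a \<in> W then \<phi> (f (\<psi> a)) else a) (\<phi> a)) else a) = f"
proof
  fix a
  show "(if a \<in> V then \<psi> ((\<lambda>a. if a \<in> W then \<phi> (f (\<psi> a)) else a) (\<phi> a)) else a) = f a"
  proof (cases "a \<in> V")
    case True
    have "f a \<in> V" using f True by (auto simp: addr_auts_def dest: bij_betwE)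
    then show ?thesis using True iso by (auto simp: addr_iso_def)
  next
    case False
    then show ?thesis using f by (auto simp: addr_auts_def)
  qed
qed

lemma card_addr_auts_iso:
  assumes iso: "addr_iso V W \<phi> \<psi>"
  shows "card (addr_auts V) = card (addr_auts W)"
proof -
  let ?F = "\<lambda>f a. if a \<in> W then \<phi> (f (\<psi> a)) else a"
  let ?G = "\<lambda>g a. if a \<in> V then \<psi> (g (\<phi> a)) else a"
  have iso': "addr_iso W V \<psi> \<phi>" using iso by (rule addr_iso_sym)
  have "bij_betw ?F (addr_auts V) (addr_auts W)"
  proof (rule bij_betw_byWitness[where f'="?G"])
    show "\<forall>a\<in>addr_auts V. ?G (?F a) = a" using addr_auts_conj_inverse[OF iso] by blast
    show "\<forall>a\<in>addr_auts W. ?F (?G a) = a" using addr_auts_conj_inverse[OF iso'] by blast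
    show "?F ` addr_auts V \<subseteq> addr_auts W" using addr_auts_conj[OF iso] by blast
    show "?G ` addr_auts W \<subseteq> addr_auts V" using addr_auts_conj[OF iso'] by blast
  qed
  then show ?thesis by (rule bij_betw_same_card)
qed

lemma mem_pverts_P:
  "a \<in> pverts (P xs) \<longleftrightarrow> a = [] \<or> (\<exists>i b. a = i # b \<and> i < length xs \<and> b \<in> pverts (xs ! i))"
  unfolding pverts_def by (cases a) auto

definition addr_map :: "(nat \<Rightarrow> nat) \<Rightarrow> (nat \<Rightarrow> nat list \<Rightarrow> nat list) \<Rightarrow> nat list \<Rightarrow> nat list" where
  "addr_map \<sigma> F a = (case a of [] \<Rightarrow> [] | i # b \<Rightarrow> \<sigma> i # F i b)"

lemma addr_map_embedding:
  assumes "\<forall>i<length xs. \<sigma> i < length ys \<and> \<tau> (\<sigma> i) = i \<and>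
             (\<forall>b\<in>pverts (xs ! i). F i b \<in> pverts (ys ! \<sigma> i) \<and> G (\<sigma> i) (F i b) = b)"
  shows "\<forall>v\<in>pverts (P xs). addr_map \<sigma> F v \<in> pverts (P ys) \<and> addr_map \<tau> G (addr_map \<sigma> F v) = v"
proof
  fix v assume v: "v \<in> pverts (P xs)"
  show "addr_map \<sigma> F v \<in> pverts (P ys) \<and> addr_map \<tau> G (addr_map \<sigma> F v) = v"
  proof (cases v)
    case Nil
    then show ?thesis by (simp add: addr_map_def mem_pverts_P)
  next
    case (Cons i b)
    then have "i < length xs" "b \<in> pverts (xs ! i)" using v by (auto simp: mem_pverts_P)
    then show ?thesis using assms Cons by (auto simp: addr_map_def mem_pverts_P)
  qed
qed

lemma addr_map_prefix:
  assumes "inj_on \<sigma> {..<length xs}"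
    and "\<forall>i<length xs. \<forall>v\<in>pverts (xs ! i). \<forall>w\<in>pverts (xs ! i). prefix w v \<longleftrightarrow> prefix (F i w) (F i v)"
  shows "\<forall>v\<in>pverts (P xs). \<forall>w\<in>pverts (P xs). prefix w v \<longleftrightarrow> prefix (addr_map \<sigma> F w) (addr_map \<sigma> F v)"
proof (intro ballI)
  fix v w assume v: "v \<in> pverts (P xs)" and w: "w \<in> pverts (P xs)"
  show "prefix w v \<longleftrightarrow> prefix (addr_map \<sigma> F w) (addr_map \<sigma> F v)"
  proof (cases "v = [] \<or> w = []")
    case True
    then show ?thesis by (auto simp: addr_map_def split: list.split)
  next
    case False
    then obtain i a j b where "v = i # a" "w = j # b" by (meson list.exhaust)
    moreover have "\<sigma> j = \<sigma> i \<longleftrightarrow> j = i" if "i < length xs" "j < length xs"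
      using assms(1) that by (auto dest: inj_onD)
    ultimately show ?thesis using v w assms(2) by (auto simp: addr_map_def mem_pverts_P)
  qed
qed

lemma addr_iso_P:
  assumes \<sigma>: "bij_betw \<sigma> {..<length xs} {..<length ys}"
    and iso: "\<forall>i<length xs. addr_iso (pverts (xs ! i)) (pverts (ys ! \<sigma> i)) (F i) (H i)"
  shows "\<exists>\<phi> \<psi>. addr_iso (pverts (P xs)) (pverts (P ys)) \<phi> \<psi>"
proof -
  define \<tau> where "\<tau> = inv_into {..<length xs} \<sigma>"
  have \<sigma>\<tau>: "\<And>i. i < length xs \<Longrightarrow> \<sigma> i < length ys \<and> \<tau> (\<sigma> i) = i"
    using \<sigma> unfolding \<tau>_def by (auto simp: bij_betw_def inv_into_f_f)
  have \<tau>\<sigma>: "\<And>j. j < length ys \<Longrightarrow> \<tau> j < length xs \<and> \<sigma> (\<tau> j) = j"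
    using \<sigma> unfolding \<tau>_def bij_betw_def by (metis inv_into_into f_inv_into_f lessThan_iff)
  let ?\<phi> = "addr_map \<sigma> F" and ?\<psi> = "addr_map \<tau> (\<lambda>j. H (\<tau> j))"
  have "\<forall>v\<in>pverts (P xs). ?\<phi> v \<in> pverts (P ys) \<and> ?\<psi> (?\<phi> v) = v"
    by (rule addr_map_embedding) (use \<sigma>\<tau> iso in \<open>auto simp: addr_iso_def\<close>)
  moreover have "\<forall>w\<in>pverts (P ys). ?\<psi> w \<in> pverts (P xs) \<and> ?\<phi> (?\<psi> w) = w"
    by (rule addr_map_embedding) (use \<tau>\<sigma> iso in \<open>fastforce simp: addr_iso_def\<close>)
  moreover have "\<forall>v\<in>pverts (P xs). \<forall>w\<in>pverts (P xs). prefix w v \<longleftrightarrow> prefix (?\<phi> w) (?\<phi> v)"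
    by (rule addr_map_prefix) (use \<sigma> iso in \<open>auto simp: bij_betw_def addr_iso_def\<close>)
  ultimately show ?thesis unfolding addr_iso_def by blast
qed

lemma addr_iso_exists: "forget p = forget q \<Longrightarrow> \<exists>\<phi> \<psi>. addr_iso (pverts p) (pverts q) \<phi> \<psi>"
proof (induction p arbitrary: q)
  case (P xs)
  obtain ys where q: "q = P ys" by (cases q)
  have m: "mset (map forget xs) = mset (map forget ys)" using P.prems q by simp
  obtain \<sigma> where \<sigma>: "bij_betw \<sigma> {..<length xs} {..<length ys}"
    and forget_\<sigma>: "\<forall>i<length xs. map forget xs ! i = map forget ys ! \<sigma> i"
    using permutation_Ex_bij[OF m] unfolding length_map by blast
  have "\<forall>i<length xs. forget (xs ! i) = forget (ys ! \<sigma> i)"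
    using forget_\<sigma> \<sigma> by (auto dest: bij_betwE)
  then have "\<forall>i<length xs. \<exists>\<phi> \<psi>. addr_iso (pverts (xs ! i)) (pverts (ys ! \<sigma> i)) \<phi> \<psi>"
    using P.IH by (meson nth_mem)
  then obtain F H where "\<forall>i<length xs. addr_iso (pverts (xs ! i)) (pverts (ys ! \<sigma> i)) (F i) (H i)"
    by metis
  then show ?case using addr_iso_P[OF \<sigma>] q by blast
qed

lemma forget_surj: "\<exists>p. forget p = t"
proof (induction t)
  case (Node N)
  obtain ns where N: "N = mset ns" by (metis ex_mset)
  have "\<forall>t\<in>set ns. \<exists>p. forget p = t" using Node.IH N by simp
  then obtain f where "\<forall>t\<in>set ns. forget (f t) = t" by metis
  then have "forget (P (map f ns)) = Node N" using N by (simp add: map_idI)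
  then show ?case by blast
qed

lemma forget_plane_rep[simp]: "forget (plane_rep t) = t"
  unfolding plane_rep_def using forget_surj by (rule someI_ex)

lemma sym_card_forget: "forget p = t \<Longrightarrow> sym_card t = card (paut p)"
proof -
  assume "forget p = t"
  then have "forget (plane_rep t) = forget p" by simp
  then obtain \<phi> \<psi> where "addr_iso (pverts (plane_rep t)) (pverts p) \<phi> \<psi>" using addr_iso_exists by blast
  then show ?thesis unfolding sym_card_def paut_eq_addr_auts by (rule card_addr_auts_iso)
qed

lemma sym_card_bullet: "sym_card bullet = 1"
proof -
  have "pverts (P []) = {[]}" by (auto simp: mem_pverts_P)
  moreover have "addr_auts {[]} = {id}"
    by (auto simp: addr_auts_def bij_betw_def fun_eq_iff) (metis list.exhaust)
  ultimately have "card (paut (P [])) = 1" unfolding paut_eq_addr_auts by simp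
  then show ?thesis by (simp add: sym_card_forget[of "P []"])
qed

lemma addr_auts_root_fixed:
  assumes g: "g \<in> addr_auts (insert [] (Cons 0 ` V))"
  shows "g [] = []" and "\<And>v. v \<in> V \<Longrightarrow> \<exists>w\<in>V. g (0 # v) = 0 # w"
proof -
  let ?V' = "insert [] (Cons 0 ` V)"
  have b: "bij_betw g ?V' ?V'" and ord: "\<forall>v\<in>?V'. \<forall>w\<in>?V'. prefix w v \<longleftrightarrow> prefix (g w) (g v)"
    using g by (auto simp: addr_auts_def)
  obtain x where x: "x \<in> ?V'" "g x = []" using b by (metis bij_betw_imp_surj_on imageE insertI1)
  have "prefix (g []) (g x)" using ord x(1) by auto
  then show g0: "g [] = []" using x(2) by simp
  fix v assume v: "v \<in> V"
  have "g (0 # v) \<in> ?V'" using b v by (auto dest: bij_betwE)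
  moreover have "g (0 # v) \<noteq> g []" using b v unfolding bij_betw_def inj_on_def by blast
  ultimately show "\<exists>w\<in>V. g (0 # v) = 0 # w" using g0 by auto
qed

definition addr_lift :: "nat list set \<Rightarrow> (nat list \<Rightarrow> nat list) \<Rightarrow> nat list \<Rightarrow> nat list" where
  "addr_lift V f a = (if a \<in> Cons 0 ` V then 0 # f (tl a) else a)"

definition addr_lower :: "nat list set \<Rightarrow> (nat list \<Rightarrow> nat list) \<Rightarrow> nat list \<Rightarrow> nat list" where
  "addr_lower V g a = (if a \<in> V then tl (g (0 # a)) else a)"

lemma addr_lift_aut:
  assumes f: "f \<in> addr_auts V"
  shows "addr_lift V f \<in> addr_auts (insert [] (Cons 0 ` V))"
proof -
  let ?V' = "insert [] (Cons 0 ` V)"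
  have bf: "bij_betw f V V" and of: "\<forall>v\<in>V. \<forall>w\<in>V. prefix w v \<longleftrightarrow> prefix (f w) (f v)"
    using f by (auto simp: addr_auts_def)
  define f' where "f' = inv_into V f"
  have l: "\<forall>a\<in>V. f' (f a) = a" and r: "\<forall>b\<in>V. f (f' b) = b"
    and fi: "\<forall>a\<in>V. f a \<in> V" and fi': "\<forall>b\<in>V. f' b \<in> V"
    using bf unfolding f'_def bij_betw_def by (auto simp: inv_into_f_f f_inv_into_f inv_into_into)
  have "bij_betw (addr_lift V f) ?V' ?V'"
    by (rule bij_betw_byWitness[where f'="addr_lift V f'"]) (use l r fi fi' in \<open>auto simp: addr_lift_def\<close>)
  moreover have "\<forall>v\<in>?V'. \<forall>w\<in>?V'. prefix w v \<longleftrightarrow> prefix (addr_lift V f w) (addr_lift V f v)"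
    using of fi by (auto simp: addr_lift_def)
  ultimately show ?thesis by (simp add: addr_auts_def addr_lift_def)
qed

lemma addr_lower_aut:
  assumes g: "g \<in> addr_auts (insert [] (Cons 0 ` V))"
  shows "addr_lower V g \<in> addr_auts V"
proof -
  let ?V' = "insert [] (Cons 0 ` V)"
  have bg: "bij_betw g ?V' ?V'" and og: "\<forall>v\<in>?V'. \<forall>w\<in>?V'. prefix w v \<longleftrightarrow> prefix (g w) (g v)"
    using g by (auto simp: addr_auts_def)
  have low: "\<And>v. v \<in> V \<Longrightarrow> addr_lower V g v \<in> V \<and> g (0 # v) = 0 # addr_lower V g v"
    using addr_auts_root_fixed(2)[OF g] by (fastforce simp: addr_lower_def)
  have inj: "inj_on (addr_lower V g) V"
  proof
    fix v1 v2 assume v: "v1 \<in> V" "v2 \<in> V" "addr_lower V g v1 = addr_lower V g v2"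
    then have "g (0 # v1) = g (0 # v2)" using low by metis
    then show "v1 = v2" using bg v unfolding bij_betw_def inj_on_def by blast
  qed
  have onto: "V \<subseteq> addr_lower V g ` V"
  proof
    fix w assume "w \<in> V"
    then have "0 # w \<in> g ` ?V'" using bg by (simp add: bij_betw_def)
    then obtain x where x: "x \<in> ?V'" "0 # w = g x" by (rule imageE)
    then have "x \<noteq> []" using addr_auts_root_fixed(1)[OF g] by auto
    then obtain v where v: "v \<in> V" "x = 0 # v" using x(1) by auto
    then have "addr_lower V g v = w" using low x by simp
    then show "w \<in> addr_lower V g ` V" using v by blast
  qed
  have "addr_lower V g ` V = V" using onto low by blast
  then have "bij_betw (addr_lower V g) V V" using inj by (simp add: bij_betw_def)
  moreover have "\<forall>a. a \<notin> V \<longrightarrow> addr_lower V g a = a" by (simp add: addr_lower_def)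
  moreover have "\<forall>v\<in>V. \<forall>w\<in>V. prefix w v \<longleftrightarrow> prefix (addr_lower V g w) (addr_lower V g v)"
  proof (intro ballI)
    fix v w assume vw: "v \<in> V" "w \<in> V"
    have "prefix w v \<longleftrightarrow> prefix (0 # w) (0 # v)" by simp
    also have "\<dots> \<longleftrightarrow> prefix (g (0 # w)) (g (0 # v))" using og vw by auto
    also have "\<dots> \<longleftrightarrow> prefix (addr_lower V g w) (addr_lower V g v)" using low vw by simp
    finally show "prefix w v \<longleftrightarrow> prefix (addr_lower V g w) (addr_lower V g v)" .
  qed
  ultimately show ?thesis by (simp add: addr_auts_def)
qed

lemma card_addr_auts_root: "card (addr_auts (insert [] (Cons 0 ` V))) = card (addr_auts V)"
proof -
  let ?V' = "insert [] (Cons 0 ` V)"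
  have "bij_betw (addr_lift V) (addr_auts V) (addr_auts ?V')"
  proof (rule bij_betw_byWitness[where f'="addr_lower V"])
    show "\<forall>f\<in>addr_auts V. addr_lower V (addr_lift V f) = f"
      by (auto simp: fun_eq_iff addr_lower_def addr_lift_def addr_auts_def)
    show "\<forall>g\<in>addr_auts ?V'. addr_lift V (addr_lower V g) = g"
    proof
      fix g assume g: "g \<in> addr_auts ?V'"
      have "addr_lift V (addr_lower V g) a = g a" for a
      proof (cases "a \<in> Cons 0 ` V")
        case True
        then obtain v where v: "v \<in> V" "a = 0 # v" by auto
        moreover obtain w where "g (0 # v) = 0 # w" using addr_auts_root_fixed(2)[OF g v(1)] by blast
        ultimately show ?thesis by (simp add: addr_lift_def addr_lower_def)
      next
        case False
        then show ?thesis using addr_auts_root_fixed(1)[OF g] g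
          by (cases "a = []") (auto simp: addr_lift_def addr_auts_def)
      qed
      then show "addr_lift V (addr_lower V g) = g" ..
    qed
  qed (use addr_lift_aut addr_lower_aut in blast)+
  then show ?thesis by (metis bij_betw_same_card)
qed

lemma sym_card_single_child: "sym_card (Node {#r#}) = sym_card r"
proof -
  have "sym_card (Node {#r#}) = card (paut (P [plane_rep r]))" by (rule sym_card_forget) simp
  also have "pverts (P [plane_rep r]) = insert [] (Cons 0 ` pverts (plane_rep r))"
    by (auto simp: mem_pverts_P)
  then have "card (paut (P [plane_rep r])) = card (addr_auts (pverts (plane_rep r)))"
    unfolding paut_eq_addr_auts by (simp only: card_addr_auts_root)
  also have "\<dots> = sym_card r" unfolding sym_card_def paut_eq_addr_auts ..
  finally show ?thesis .
qed

section \<open>The Grossman--Larson product on kT\<close>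

abbreviation supp :: "('a \<Rightarrow> 'k::zero) \<Rightarrow> 'a set" where
  "supp x \<equiv> {t. x t \<noteq> 0}"

definition gl_count :: "rtree \<Rightarrow> rtree \<Rightarrow> rtree \<Rightarrow> 'k::field" where
  "gl_count t t' r = of_nat (count (gl_trees t t') r)"

lemma gl_eq_sum:
  fixes x y :: "'k::field kT"
  assumes "finite S" "supp x \<subseteq> S" "finite S'" "supp y \<subseteq> S'"
  shows "gl x y r = (\<Sum>t\<in>S. \<Sum>t'\<in>S'. x t * y t' * gl_count t t' r)"
proof -
  have "gl x y r = (\<Sum>t\<in>supp x. \<Sum>t'\<in>supp y. x t * y t' * gl_count t t' r)"
    unfolding gl_def gl_count_def by simp
  also have "\<dots> = (\<Sum>t\<in>supp x. \<Sum>t'\<in>S'. x t * y t' * gl_count t t' r)"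
    by (intro sum.cong refl sum.mono_neutral_left) (use assms in auto)
  also have "\<dots> = (\<Sum>t\<in>S. \<Sum>t'\<in>S'. x t * y t' * gl_count t t' r)"
    by (intro sum.mono_neutral_left) (use assms in auto)
  finally show ?thesis .
qed

lemma gl_zero_right[simp]: "gl x (\<lambda>_. 0) = (\<lambda>_. 0)"
  unfolding gl_def by simp

lemma supp_gl:
  fixes x y :: "'k::field kT"
  shows "supp (gl x y) \<subseteq> (\<Union>t\<in>supp x. \<Union>t'\<in>supp y. set_mset (gl_trees t t'))"
proof
  fix r assume "r \<in> supp (gl x y)"
  then have "gl x y r \<noteq> 0" by simp
  then obtain t t' where "t \<in> supp x" "t' \<in> supp y" "count (gl_trees t t') r \<noteq> 0"
    unfolding gl_def by (metis (no_types, lifting) mult_zero_right of_nat_0 sum.neutral)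
  then show "r \<in> (\<Union>t\<in>supp x. \<Union>t'\<in>supp y. set_mset (gl_trees t t'))" by (auto simp: count_eq_zero_iff)
qed

lemma finsupp_gl:
  fixes x y :: "'k::field kT"
  assumes "finsupp x" "finsupp y"
  shows "finsupp (gl x y)"
  using finite_subset[OF supp_gl[of x y]] assms by (auto simp: finsupp_def)

lemma finsupp_basis: "finsupp (basis t :: 'k::field kT)"
  unfolding finsupp_def basis_def by simp

lemma finsupp_lincomb:
  fixes f :: "'i \<Rightarrow> 'a \<Rightarrow> 'k::field"
  assumes "finite I" "\<forall>i\<in>I. finsupp (f i)"
  shows "finsupp (\<lambda>r. \<Sum>i\<in>I. c i * f i r)"
proof -
  have "supp (\<lambda>r. \<Sum>i\<in>I. c i * f i r) \<subseteq> (\<Union>i\<in>I. supp (f i))"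
    by (auto intro: ccontr simp: sum.neutral)
  moreover have "finite (\<Union>i\<in>I. supp (f i))" using assms by (auto simp: finsupp_def)
  ultimately show ?thesis unfolding finsupp_def by (rule finite_subset)
qed

lemma gl_basis_bullet_right:
  fixes x :: "'k::field kT"
  assumes "finsupp x"
  shows "gl x (basis bullet) = x"
proof
  fix r
  have fs: "finite (supp x)" using assms by (simp add: finsupp_def)
  have "gl x (basis bullet) r = (\<Sum>t\<in>supp x. \<Sum>t'\<in>{bullet}. x t * basis bullet t' * gl_count t t' r)"
    by (rule gl_eq_sum) (use fs in \<open>auto simp: basis_def\<close>)
  also have "\<dots> = (\<Sum>t\<in>supp x. if t = r then x t else 0)"
    by (intro sum.cong refl) (simp add: basis_def gl_count_def gl_trees_bullet_right)
  also have "\<dots> = x r" using fs by (simp add: sum.delta')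
  finally show "gl x (basis bullet) r = x r" .
qed

lemma gl_basis_bullet_left:
  fixes y :: "'k::field kT"
  assumes "finsupp y"
  shows "gl (basis bullet) y = y"
proof
  fix r
  have fs: "finite (supp y)" using assms by (simp add: finsupp_def)
  have "gl (basis bullet) y r = (\<Sum>t\<in>{bullet}. \<Sum>t'\<in>supp y. basis bullet t * y t' * gl_count t t' r)"
    by (rule gl_eq_sum) (use fs in \<open>auto simp: basis_def\<close>)
  also have "\<dots> = (\<Sum>t'\<in>supp y. y t' * gl_count bullet t' r)"
    by (simp add: basis_def)
  also have "\<dots> = (\<Sum>t'\<in>supp y. if t' = r then y t' else 0)"
    by (intro sum.cong refl) (simp add: gl_count_def gl_trees_bullet_left)
  also have "\<dots> = y r" using fs by (simp add: sum.delta')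
  finally show "gl (basis bullet) y r = y r" .
qed

lemma gl_at_bullet:
  fixes x y :: "'k::field kT"
  assumes "finsupp x" "finsupp y"
  shows "gl x y bullet = x bullet * y bullet"
proof -
  have fs: "finite (supp x)" "finite (supp y)" using assms by (auto simp: finsupp_def)
  have "gl x y bullet = (\<Sum>t\<in>insert bullet (supp x). \<Sum>t'\<in>insert bullet (supp y). x t * y t' * gl_count t t' bullet)"
    by (rule gl_eq_sum) (use fs in auto)
  also have "\<dots> = (\<Sum>t\<in>insert bullet (supp x). if t = bullet then x bullet * y bullet else 0)"
    by (intro sum.cong refl) (simp add: gl_count_def count_gl_trees_bullet if_distrib sum.delta' fs cong: if_cong)
  also have "\<dots> = x bullet * y bullet" using fs by (simp add: sum.delta')
  finally show ?thesis .
qed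

lemma gl_lincomb_left:
  fixes f :: "'i \<Rightarrow> 'k::field kT"
  assumes W: "finite W" and fw: "\<forall>w\<in>W. finsupp (f w)" and fy: "finsupp y"
  shows "gl (\<lambda>r. \<Sum>w\<in>W. c w * f w r) y = (\<lambda>r. \<Sum>w\<in>W. c w * gl (f w) y r)"
proof
  fix r
  define S where "S = (\<Union>w\<in>W. supp (f w))"
  have fS: "finite S" using W fw by (auto simp: S_def finsupp_def)
  have fSy: "finite (supp y)" using fy by (simp add: finsupp_def)
  have sub: "supp (\<lambda>r. \<Sum>w\<in>W. c w * f w r) \<subseteq> S"
    by (auto intro: ccontr simp: S_def sum.neutral)
  have "gl (\<lambda>r. \<Sum>w\<in>W. c w * f w r) y r = (\<Sum>t\<in>S. \<Sum>t'\<in>supp y. (\<Sum>w\<in>W. c w * f w t) * y t' * gl_count t t' r)"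
    by (rule gl_eq_sum) (use fS fSy sub in auto)
  also have "\<dots> = (\<Sum>w\<in>W. c w * (\<Sum>t\<in>S. \<Sum>t'\<in>supp y. f w t * y t' * gl_count t t' r))"
    by (simp add: sum_distrib_left sum_distrib_right mult.assoc sum.swap[of _ W] sum.swap[of _ W "supp y"])
  also have "\<dots> = (\<Sum>w\<in>W. c w * gl (f w) y r)"
    by (intro sum.cong refl arg_cong[where f="(*) _"] gl_eq_sum[symmetric]) (use fS fSy in \<open>auto simp: S_def\<close>)
  finally show "gl (\<lambda>r. \<Sum>w\<in>W. c w * f w r) y r = (\<Sum>w\<in>W. c w * gl (f w) y r)" .
qed

lemma sum_of_nat_count:
  fixes g :: "'a \<Rightarrow> 'k::comm_semiring_1"
  assumes "finite S" "set_mset M \<subseteq> S"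
  shows "(\<Sum>m\<in>S. of_nat (count M m) * g m) = (\<Sum>m\<in>#M. g m)"
  using assms(2)
proof (induction M)
  case empty
  then show ?case by simp
next
  case (add a M)
  have "(\<Sum>m\<in>S. of_nat (count (add_mset a M) m) * g m)
      = (\<Sum>m\<in>S. of_nat (count M m) * g m) + (\<Sum>m\<in>S. if m = a then g m else 0)"
    by (simp add: sum.distrib[symmetric]) (intro sum.cong refl, auto simp: distrib_right add.commute)
  also have "(\<Sum>m\<in>S. if m = a then g m else 0) = g a" using add.prems assms(1) by (simp add: sum.delta')
  finally show ?case using add by (simp add: add.commute)
qed

lemma of_nat_count_sum_mset:
  "(of_nat (count (\<Sum>m\<in>#M. F m) r) :: 'k::comm_semiring_1) = (\<Sum>m\<in>#M. of_nat (count (F m) r))"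
  by (induction M) auto

lemma sum_gl_count_compose:
  assumes "finite S" "set_mset (gl_trees a b) \<subseteq> S"
  shows "(\<Sum>m\<in>S. gl_count a b m * f m) = (\<Sum>m\<in>#gl_trees a b. f m)"
  unfolding gl_count_def using assms by (rule sum_of_nat_count)

lemma sum_reorder_left:
  fixes f :: "'a \<Rightarrow> 'b \<Rightarrow> 'm \<Rightarrow> 'k::comm_semiring_0"
  shows "(\<Sum>m\<in>M. \<Sum>c\<in>C. (\<Sum>a\<in>A. \<Sum>b\<in>B. f a b m) * g m c) = (\<Sum>a\<in>A. \<Sum>b\<in>B. \<Sum>c\<in>C. \<Sum>m\<in>M. f a b m * g m c)"
  by (simp add: sum_distrib_right sum.swap[of _ M A] sum.swap[of _ M B] sum.swap[of _ M C]
      sum.swap[of _ C A] sum.swap[of _ C B])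

lemma sum_reorder_right:
  fixes f :: "'a \<Rightarrow> 'm \<Rightarrow> 'k::comm_semiring_0"
  shows "(\<Sum>a\<in>A. \<Sum>m\<in>M. f a m * (\<Sum>b\<in>B. \<Sum>c\<in>C. g b c m)) = (\<Sum>a\<in>A. \<Sum>b\<in>B. \<Sum>c\<in>C. \<Sum>m\<in>M. f a m * g b c m)"
  by (simp add: sum_distrib_left sum.swap[of _ M B] sum.swap[of _ M C])

lemma gl_gl_left:
  fixes x y z :: "'k::field kT"
  assumes "finsupp x" "finsupp y" "finsupp z"
  shows "gl (gl x y) z r = (\<Sum>a\<in>supp x. \<Sum>b\<in>supp y. \<Sum>c\<in>supp z.
           x a * y b * z c * of_nat (count (\<Sum>m\<in>#gl_trees a b. gl_trees m c) r))"
proof -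
  define S where "S = (\<Union>a\<in>supp x. \<Union>b\<in>supp y. set_mset (gl_trees a b))"
  have f: "finite (supp x)" "finite (supp y)" "finite (supp z)" "finite S"
    using assms by (auto simp: finsupp_def S_def)
  have xy: "gl x y m = (\<Sum>a\<in>supp x. \<Sum>b\<in>supp y. x a * y b * gl_count a b m)" for m
    by (rule gl_eq_sum) (use f in auto)
  have sub: "\<And>a b. a \<in> supp x \<Longrightarrow> b \<in> supp y \<Longrightarrow> set_mset (gl_trees a b) \<subseteq> S"
    unfolding S_def by blast
  have "gl (gl x y) z r = (\<Sum>m\<in>S. \<Sum>c\<in>supp z. gl x y m * z c * gl_count m c r)"
    by (rule gl_eq_sum) (use f supp_gl[of x y] in \<open>auto simp: S_def\<close>)
  also have "\<dots> = (\<Sum>m\<in>S. \<Sum>c\<in>supp z. gl x y m * (z c * gl_count m c r))"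
    by (simp add: mult.assoc)
  also have "\<dots> = (\<Sum>a\<in>supp x. \<Sum>b\<in>supp y. \<Sum>c\<in>supp z. \<Sum>m\<in>S. x a * y b * gl_count a b m * (z c * gl_count m c r))"
    unfolding xy by (rule sum_reorder_left)
  also have "\<dots> = (\<Sum>a\<in>supp x. \<Sum>b\<in>supp y. \<Sum>c\<in>supp z. x a * y b * z c * (\<Sum>m\<in>S. gl_count a b m * gl_count m c r))"
    by (simp add: sum_distrib_left ac_simps)
  also have "\<dots> = (\<Sum>a\<in>supp x. \<Sum>b\<in>supp y. \<Sum>c\<in>supp z.
           x a * y b * z c * of_nat (count (\<Sum>m\<in>#gl_trees a b. gl_trees m c) r))"
    by (intro sum.cong refl arg_cong[where f="(*) _"])
      (simp add: sum_gl_count_compose[OF f(4) sub], simp add: of_nat_count_sum_mset gl_count_def)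
  finally show ?thesis .
qed

lemma gl_gl_right:
  fixes x y z :: "'k::field kT"
  assumes "finsupp x" "finsupp y" "finsupp z"
  shows "gl x (gl y z) r = (\<Sum>a\<in>supp x. \<Sum>b\<in>supp y. \<Sum>c\<in>supp z.
           x a * y b * z c * of_nat (count (\<Sum>m\<in>#gl_trees b c. gl_trees a m) r))"
proof -
  define S where "S = (\<Union>b\<in>supp y. \<Union>c\<in>supp z. set_mset (gl_trees b c))"
  have f: "finite (supp x)" "finite (supp y)" "finite (supp z)" "finite S"
    using assms by (auto simp: finsupp_def S_def)
  have yz: "gl y z m = (\<Sum>b\<in>supp y. \<Sum>c\<in>supp z. y b * z c * gl_count b c m)" for m
    by (rule gl_eq_sum) (use f in auto)
  have sub: "\<And>b c. b \<in> supp y \<Longrightarrow> c \<in> supp z \<Longrightarrow> set_mset (gl_trees b c) \<subseteq> S"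
    unfolding S_def by blast
  have "gl x (gl y z) r = (\<Sum>a\<in>supp x. \<Sum>m\<in>S. (x a * gl_count a m r) * gl y z m)"
    by (subst gl_eq_sum[of "supp x" _ S]) (use f supp_gl[of y z] in \<open>auto simp: S_def ac_simps\<close>)
  also have "\<dots> = (\<Sum>a\<in>supp x. \<Sum>b\<in>supp y. \<Sum>c\<in>supp z. \<Sum>m\<in>S. (x a * gl_count a m r) * (y b * z c * gl_count b c m))"
    unfolding yz by (rule sum_reorder_right)
  also have "\<dots> = (\<Sum>a\<in>supp x. \<Sum>b\<in>supp y. \<Sum>c\<in>supp z. x a * y b * z c * (\<Sum>m\<in>S. gl_count b c m * gl_count a m r))"
    by (simp add: sum_distrib_left ac_simps)
  also have "\<dots> = (\<Sum>a\<in>supp x. \<Sum>b\<in>supp y. \<Sum>c\<in>supp z.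
           x a * y b * z c * of_nat (count (\<Sum>m\<in>#gl_trees b c. gl_trees a m) r))"
    by (intro sum.cong refl arg_cong[where f="(*) _"])
      (simp add: sum_gl_count_compose[OF f(4) sub], simp add: of_nat_count_sum_mset gl_count_def)
  finally show ?thesis .
qed

lemma gl_assoc:
  fixes x y z :: "'k::field kT"
  assumes "finsupp x" "finsupp y" "finsupp z"
  shows "gl (gl x y) z = gl x (gl y z)"
  using gl_gl_left[OF assms] gl_gl_right[OF assms] by (simp add: gl_trees_assoc fun_eq_iff)

lemma sum_gl_count_single_child:
  fixes y :: "'k::field kT"
  assumes "finite (supp y)"
  shows "(\<Sum>t'\<in>insert bullet (supp y). y t' * gl_count t t' (Node {#r#}))
       = (if t = Node {#r#} then y bullet else 0) + (\<Sum>s\<in>(\<lambda>s. Node {#s#}) -` supp y. y (Node {#s#}) * gl_count t s r)"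
proof -
  let ?S = "insert bullet (supp y)" and ?N = "\<lambda>s. Node {#s#}"
  let ?F = "\<lambda>t'. y t' * gl_count t (sole_child t') r"
  have split: "(\<Sum>t'\<in>?S. y t' * gl_count t t' (Node {#r#})) =
     (\<Sum>t'\<in>?S. if t' = bullet \<and> t = Node {#r#} then y t' else 0) + (\<Sum>t'\<in>?S. if t' \<in> range ?N then ?F t' else 0)"
    unfolding sum.distrib[symmetric] gl_count_def count_gl_trees_single_child_tree
    by (intro sum.cong refl) (simp add: distrib_left)
  have bullet: "(\<Sum>t'\<in>?S. if t' = bullet \<and> t = Node {#r#} then y t' else 0) = (if t = Node {#r#} then y bullet else 0)"
    using assms by (simp add: sum.delta')
  have "?N -` ?S = ?N -` supp y" by auto
  then have "?S \<inter> range ?N = ?N ` (?N -` supp y)" by (metis image_vimage_eq)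
  then have "(\<Sum>t'\<in>?S. if t' \<in> range ?N then ?F t' else 0) = (\<Sum>t'\<in>?N ` (?N -` supp y). ?F t')"
    using assms by (simp add: sum.inter_restrict[symmetric])
  also have "\<dots> = (\<Sum>s\<in>?N -` supp y. y (?N s) * gl_count t s r)"
    by (subst sum.reindex) (auto simp: inj_on_def)
  finally show ?thesis using split bullet by simp
qed

lemma Bminus_gl:
  fixes x y :: "'k::field kT"
  assumes "finsupp x" "finsupp y"
  shows "Bminus (gl x y) = (\<lambda>r. y bullet * x (Node {#r#}) + gl x (Bminus y) r)"
proof
  fix r
  let ?B = "(\<lambda>s. Node {#s#}) -` supp y"
  have f: "finite (supp x)" "finite (supp y)" using assms by (auto simp: finsupp_def)
  have fB: "finite ?B" by (rule finite_vimageI) (use f in \<open>auto simp: inj_def\<close>)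
  have "Bminus (gl x y) r = (\<Sum>t\<in>supp x. \<Sum>t'\<in>insert bullet (supp y). x t * y t' * gl_count t t' (Node {#r#}))"
    unfolding Bminus_def by (rule gl_eq_sum) (use f in auto)
  also have "\<dots> = (\<Sum>t\<in>supp x. x t * (if t = Node {#r#} then y bullet else 0))
      + (\<Sum>t\<in>supp x. \<Sum>s\<in>?B. x t * Bminus y s * gl_count t s r)"
    unfolding mult.assoc sum_distrib_left[symmetric] sum_gl_count_single_child[OF f(2)]
    by (simp add: distrib_left sum.distrib sum_distrib_left Bminus_def mult.assoc)
  also have "(\<Sum>t\<in>supp x. x t * (if t = Node {#r#} then y bullet else 0)) = y bullet * x (Node {#r#})"
    using f by (cases "x (Node {#r#}) = 0") (auto simp: if_distrib sum.delta' cong: if_cong)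
  also have "(\<Sum>t\<in>supp x. \<Sum>s\<in>?B. x t * Bminus y s * gl_count t s r) = gl x (Bminus y) r"
    by (rule gl_eq_sum[symmetric]) (use f fB in \<open>auto simp: Bminus_def\<close>)
  finally show "Bminus (gl x y) r = y bullet * x (Node {#r#}) + gl x (Bminus y) r" .
qed

section \<open>The elements kappa and eps\<close>

lemma tsize_pos: "1 \<le> tsize t"
  by (cases t) auto

lemma size_le_sum_tsize: "size N \<le> sum_mset (image_mset tsize N)"
proof (induction N)
  case (add x N)
  then show ?case using tsize_pos[of x] by simp
qed simp

lemma tsize_le_sum_tsize: "x \<in># N \<Longrightarrow> tsize x \<le> sum_mset (image_mset tsize N)"
  by (auto dest!: multi_member_split)

lemma finite_tsize_le: "finite {t. tsize t \<le> n}"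
proof (induction n)
  case 0
  then show ?case using tsize_pos by (metis (no_types, lifting) Collect_empty_eq finite.emptyI le_zero_eq one_neq_zero)
next
  case (Suc n)
  let ?L = "{xs. set xs \<subseteq> {t. tsize t \<le> n} \<and> length xs \<le> n}"
  have "{t. tsize t \<le> Suc n} \<subseteq> Node ` (mset ` ?L)"
  proof
    fix t assume t: "t \<in> {t. tsize t \<le> Suc n}"
    obtain xs where tN: "t = Node (mset xs)" by (metis ex_mset rtree.exhaust)
    have s: "sum_mset (image_mset tsize (mset xs)) \<le> n" using t tN by simp
    have "length xs \<le> n" using size_le_sum_tsize[of "mset xs"] s by simp
    moreover have "set xs \<subseteq> {t. tsize t \<le> n}" using tsize_le_sum_tsize[of _ "mset xs"] s by fastforce
    ultimately show "t \<in> Node ` (mset ` ?L)" using tN by blast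
  qed
  moreover have "finite ?L" using Suc by (rule finite_lists_length_le)
  ultimately show ?case by (meson finite_imageI finite_subset)
qed

lemma finsupp_kappa: "finsupp (kappa n :: 'k::field kT)"
proof -
  have "supp (kappa n :: 'k kT) \<subseteq> {t. tsize t \<le> n + 1}" by (auto simp: kappa_def split: if_splits)
  then show ?thesis unfolding finsupp_def using finite_tsize_le by (rule finite_subset)
qed

lemma tsize_eq_1_iff: "tsize t = 1 \<longleftrightarrow> t = bullet"
proof (cases t)
  case (Node N)
  have "sum_mset (image_mset tsize N) = 0 \<longleftrightarrow> N = {#}"
    using size_le_sum_tsize[of N] by (metis le_zero_eq size_eq_0_iff_empty sum_mset.empty image_mset_empty)
  then show ?thesis using Node by simp
qed

lemma tsize_eq_2_iff: "tsize t = 2 \<longleftrightarrow> t = Node {#bullet#}"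
proof
  assume t: "tsize t = 2"
  obtain N where tN: "t = Node N" by (cases t)
  then have s: "sum_mset (image_mset tsize N) = 1" using t by simp
  then obtain x N' where N: "N = add_mset x N'" by (metis multiset_cases sum_mset.empty image_mset_empty zero_neq_one)
  have "tsize x + sum_mset (image_mset tsize N') = 1" using s N by simp
  moreover have "1 \<le> tsize x" by (rule tsize_pos)
  moreover have "size N' \<le> sum_mset (image_mset tsize N')" by (rule size_le_sum_tsize)
  ultimately have "tsize x = 1" "size N' = 0" by linarith+
  then show "t = Node {#bullet#}" using tN N tsize_eq_1_iff by auto
qed auto

lemma kappa_0: "kappa 0 = basis bullet"
  by (auto simp: fun_eq_iff kappa_def basis_def tsize_eq_1_iff[unfolded One_nat_def] sym_card_bullet)

lemma kappa_bullet: "0 < m \<Longrightarrow> kappa m bullet = 0"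
  by (simp add: kappa_def)

lemma Bminus_kappa: "0 < n \<Longrightarrow> Bminus (kappa n) = kappa (n - 1)"
  by (auto simp: fun_eq_iff Bminus_def kappa_def sym_card_single_child)

lemma Bminus_basis_bullet: "Bminus (basis bullet) = (\<lambda>_. 0)"
  by (auto simp: Bminus_def basis_def)

declare eps.simps[simp del]

lemma eps_0: "eps 0 = basis bullet"
  by (subst eps.simps) simp

lemma eps_pos: "0 < n \<Longrightarrow> eps n = (\<lambda>r. \<Sum>j<n. (-1) ^ (n - j - 1) * gl (kappa (n - j)) (eps j) r)"
  by (subst eps.simps) simp

lemma finsupp_eps: "finsupp (eps n :: 'k::field kT)"
proof (induction n rule: less_induct)
  case (less n)
  show ?case
  proof (cases "n = 0")
    case True
    then show ?thesis by (simp add: eps_0 finsupp_basis)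
  next
    case False
    have "\<forall>j\<in>{..<n}. finsupp (gl (kappa (n - j)) (eps j) :: 'k kT)"
      using less by (auto intro: finsupp_gl finsupp_kappa)
    then show ?thesis using False by (simp add: eps_pos finsupp_lincomb)
  qed
qed

lemma eps_bullet: "0 < n \<Longrightarrow> eps n bullet = (0 :: 'k::field)"
  by (simp add: eps_pos gl_at_bullet finsupp_kappa finsupp_eps kappa_bullet)

lemma eps_1: "eps 1 = (basis (ladder 2) :: 'k::field kT)"
proof -
  have "ladder 2 = Node {#bullet#}"
    by (simp add: ladder_def Bplus_def numeral_2_eq_2)
  moreover have "eps 1 = (kappa 1 :: 'k kT)"
    by (simp add: eps_pos eps_0 gl_basis_bullet_right finsupp_kappa)
  ultimately show ?thesis
    by (auto simp: fun_eq_iff kappa_def basis_def tsize_eq_2_iff[unfolded numeral_2_eq_2]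
        sym_card_single_child sym_card_bullet)
qed

lemma Bminus_eps_expand:
  assumes "0 < n"
  shows "Bminus (eps n :: 'k::field kT) r =
    (\<Sum>j<n. (-1) ^ (n - j - 1) * (eps j bullet * kappa (n - j - 1) r + gl (kappa (n - j)) (Bminus (eps j)) r))"
proof -
  have "gl (kappa (n - j)) (eps j) (Node {#r#}) = (eps j bullet * kappa (n - j - 1) r + gl (kappa (n - j)) (Bminus (eps j)) r :: 'k)"
    if "j < n" for j
  proof -
    have kn: "kappa (n - j) (Node {#r#}) = (kappa (n - j - 1) r :: 'k)"
      using fun_cong[OF Bminus_kappa[of "n - j"], of r] that by (simp add: Bminus_def)
    show ?thesis
      using fun_cong[OF Bminus_gl[OF finsupp_kappa finsupp_eps, of "n - j" j], of r] unfolding kn[symmetric] by (simp add: Bminus_def)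
  qed
  then show ?thesis using assms by (simp add: eps_pos Bminus_def)
qed

lemma Bminus_eps: "Bminus (eps n :: 'k::field kT) = (if n = 1 then basis bullet else (\<lambda>_. 0))"
proof (induction n rule: less_induct)
  case (less n)
  show ?case
  proof (cases "n = 0")
    case True
    then show ?thesis by (simp add: eps_0 Bminus_basis_bullet)
  next
    case False
    show ?thesis
    proof
      fix r
      let ?c = "\<lambda>j. (-1) ^ (n - j - 1) * (eps j bullet * kappa (n - j - 1) r + gl (kappa (n - j)) (Bminus (eps j)) r :: 'k)"
      have rest: "?c j = (if j = 1 then (-1) ^ (n - 2) * kappa (n - 1) r else 0)" if "j \<in> {1..<n}" for j
        using that less[of j] eps_bullet[of j]
        by (auto simp: gl_basis_bullet_right finsupp_kappa numeral_2_eq_2)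
      have first: "?c 0 = (-1) ^ (n - 1) * kappa (n - 1) r"
        by (simp add: eps_0 Bminus_basis_bullet) (simp add: basis_def)
      have "{..<n} = insert 0 {1..<n}" using False by auto
      then have "Bminus (eps n) r = ?c 0 + (\<Sum>j\<in>{1..<n}. ?c j)"
        using False by (simp add: Bminus_eps_expand)
      also have "\<dots> = (-1) ^ (n - 1) * kappa (n - 1) r + (if 1 < n then (-1) ^ (n - 2) * kappa (n - 1) r else 0)"
      proof -
        have "(\<Sum>j\<in>{1..<n}. ?c j) = (\<Sum>j\<in>{1..<n}. if j = 1 then (-1) ^ (n - 2) * kappa (n - 1) r else 0)"
          by (rule sum.cong[OF refl rest])
        then show ?thesis unfolding first by (simp add: sum.delta)
      qed
      finally have expand: "Bminus (eps n :: 'k kT) r = (-1) ^ (n - 1) * kappa (n - 1) r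
          + (if 1 < n then (-1) ^ (n - 2) * kappa (n - 1) r else 0)" .
      show "Bminus (eps n :: 'k kT) r = (if n = 1 then basis bullet else (\<lambda>_. 0)) r"
      proof (cases "n = 1")
        case True
        then show ?thesis using expand by (simp add: kappa_0)
      next
        case False
        then have "n - 1 = Suc (n - 2)" using \<open>n \<noteq> 0\<close> by simp
        then have "(-1 :: 'k) ^ (n - 1) = - ((-1) ^ (n - 2))" by simp
        then show ?thesis using expand False \<open>n \<noteq> 0\<close> by simp
      qed
    qed
  qed
qed

lemma Z_word_Nil: "Z_word [] = basis bullet"
  by (simp add: Z_word_def)

lemma Z_word_Cons: "Z_word (j # v) = gl (eps j) (Z_word v)"
  by (simp add: Z_word_def)

lemma finsupp_Z_word: "finsupp (Z_word w :: 'k::field kT)"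
  by (induction w) (auto simp: Z_word_Nil Z_word_Cons finsupp_basis intro: finsupp_gl finsupp_eps)

lemma Z_word_bullet: "\<forall>j\<in>set w. 1 \<le> j \<Longrightarrow> Z_word w bullet = (if w = [] then 1 else (0 :: 'k::field))"
  by (cases w) (auto simp: Z_word_Nil Z_word_Cons basis_def gl_at_bullet finsupp_eps finsupp_Z_word eps_bullet)

lemma Bminus_Z_word:
  assumes "\<forall>j\<in>set w. 1 \<le> j"
  shows "Bminus (Z_word w :: 'k::field kT) = (if w \<noteq> [] \<and> last w = 1 then Z_word (butlast w) else (\<lambda>_. 0))"
  using assms
proof (induction w)
  case Nil
  then show ?case by (simp add: Z_word_Nil Bminus_basis_bullet)
next
  case (Cons j v)
  have "Bminus (Z_word (j # v) :: 'k kT) = (\<lambda>r. Z_word v bullet * eps j (Node {#r#}) + gl (eps j) (Bminus (Z_word v)) r)"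
    unfolding Z_word_Cons by (rule Bminus_gl) (auto intro: finsupp_eps finsupp_Z_word)
  also have "\<dots> = (if j # v \<noteq> [] \<and> last (j # v) = 1 then Z_word (butlast (j # v)) else (\<lambda>_. 0))"
  proof (cases "v = []")
    case True
    have "Z_word v bullet = (1::'k)" "Bminus (Z_word v) = (\<lambda>_. 0::'k)"
      using True by (simp_all only: Z_word_Nil Bminus_basis_bullet) (simp add: basis_def)
    then have "(\<lambda>r. Z_word v bullet * eps j (Node {#r#}) + gl (eps j) (Bminus (Z_word v)) r) = Bminus (eps j :: 'k kT)"
      by (simp add: Bminus_def)
    then show ?thesis using True by (simp add: Bminus_eps Z_word_Nil)
  next
    case False
    then have "Z_word v bullet = (0 :: 'k)" using Cons.prems by (simp add: Z_word_bullet)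
    then show ?thesis using Cons False by (auto simp: Z_word_Cons)
  qed
  finally show ?case .
qed

lemma Z_word_snoc: "Z_word (v @ [1]) = gl (Z_word v) (eps 1 :: 'k::field kT)"
proof (induction v)
  case Nil
  then show ?case by (simp add: Z_word_def gl_basis_bullet_right gl_basis_bullet_left finsupp_eps)
next
  case (Cons j v)
  then show ?case
    by (simp add: Z_word_Cons gl_assoc finsupp_eps finsupp_Z_word)
qed

section \<open>The maps alpha_+^* and alpha_-^* under Z\<close>

lemma image_snoc_one: "(\<lambda>v. v @ [1::nat]) ` {v. Q (v @ [1])} = {w. Q w \<and> w \<noteq> [] \<and> last w = 1}"
proof (intro equalityI subsetI)
  fix w assume w: "w \<in> {w. Q w \<and> w \<noteq> [] \<and> last w = 1}"
  then have "w \<noteq> []" "last w = 1" by auto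
  then have "w = butlast w @ [1]" using append_butlast_last_id[of w] by simp
  moreover from w calculation have "butlast w \<in> {v. Q (v @ [1])}" by simp
  ultimately show "w \<in> (\<lambda>v. v @ [1]) ` {v. Q (v @ [1])}" by (rule image_eqI)
qed auto

lemma Z_alpha_plus:
  fixes u :: "nat list \<Rightarrow> 'k::field"
  assumes "is_nsym u"
  shows "Z (alpha_plus u) = Bminus (Pi_proj (Z u))"
proof
  fix r
  have fin: "finite (supp u)" using assms by (simp add: is_nsym_def finsupp_def)
  have "Bminus (Pi_proj (Z u)) r = (\<Sum>w\<in>supp u. u w * Bminus (Z_word w) r)"
    by (simp add: Bminus_def Pi_proj_def Z_def)
  also have "\<dots> = (\<Sum>w\<in>supp u. if w \<noteq> [] \<and> last w = 1 then u w * Z_word (butlast w) r else 0)"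
    using assms by (intro sum.cong refl) (simp add: is_nsym_def Bminus_Z_word)
  also have "\<dots> = (\<Sum>w\<in>{w. u w \<noteq> 0 \<and> w \<noteq> [] \<and> last w = 1}. u w * Z_word (butlast w) r)"
    using fin by (simp add: sum.inter_filter[symmetric] conj_assoc)
  also have "\<dots> = (\<Sum>v\<in>{v. u (v @ [1]) \<noteq> 0}. u (v @ [1]) * Z_word v r)"
    unfolding image_snoc_one[of "\<lambda>w. u w \<noteq> 0", symmetric] by (subst sum.reindex) (auto simp: inj_on_def)
  also have "\<dots> = Z (alpha_plus u) r" by (simp add: Z_def alpha_plus_def)
  finally show "Z (alpha_plus u) r = Bminus (Pi_proj (Z u)) r" ..
qed

lemma Z_alpha_minus:
  fixes u :: "nat list \<Rightarrow> 'k::field"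
  assumes "finsupp u"
  shows "Z (alpha_minus u) = Z u \<circ>\<^sub>G\<^sub>L eps 1"
proof -
  have fin: "finite (supp u)" using assms by (simp add: finsupp_def)
  have "Z u \<circ>\<^sub>G\<^sub>L eps 1 = (\<lambda>r. \<Sum>w\<in>supp u. u w * gl (Z_word w) (eps 1) r)"
    unfolding Z_def by (rule gl_lincomb_left[OF fin]) (simp_all add: finsupp_Z_word finsupp_eps)
  also have "\<dots> = (\<lambda>r. \<Sum>w\<in>supp u. u w * Z_word (w @ [1]) r)"
    by (simp only: Z_word_snoc)
  also have "\<dots> = Z (alpha_minus u)"
  proof
    fix r
    have "(\<lambda>v. v @ [1]) ` supp u = {w. u (butlast w) \<noteq> 0 \<and> w \<noteq> [] \<and> last w = 1}"
      using image_snoc_one[of "\<lambda>w. u (butlast w) \<noteq> 0"] by simp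
    then have "supp (alpha_minus u) = (\<lambda>v. v @ [1]) ` supp u"
      by (auto simp: alpha_minus_def)
    then show "(\<Sum>w\<in>supp u. u w * Z_word (w @ [1]) r) = Z (alpha_minus u) r"
      unfolding Z_def by (simp add: sum.reindex inj_on_def alpha_minus_def)
  qed
  finally show ?thesis ..
qed

theorem mainTheorem6:
  fixes u :: "nat list \<Rightarrow> 'k::field_char_0"
  assumes "is_nsym u"
  shows "Z (alpha_plus u) = Bminus (Pi_proj (Z u)) \<and>
         (Z (alpha_minus u) = Z u \<circ>\<^sub>G\<^sub>L eps 1 \<and> Z u \<circ>\<^sub>G\<^sub>L eps 1 = Z u \<circ>\<^sub>G\<^sub>L basis (ladder 2))"
proof -
  have "Z (alpha_minus u) = Z u \<circ>\<^sub>G\<^sub>L eps 1"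
    by (rule Z_alpha_minus) (use assms in \<open>simp add: is_nsym_def\<close>)
  moreover have "Z u \<circ>\<^sub>G\<^sub>L eps 1 = Z u \<circ>\<^sub>G\<^sub>L basis (ladder 2)"
    by (simp only: eps_1)
  ultimately show ?thesis using Z_alpha_plus[OF assms] by blast
qed

end
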